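(* Let $a,b\in C^0(\mathbb{R})$ be even and positive, and let $G\in C^{1,1}_{\rm loc}(\mathbb{R})$ be even with $G(s)\ge G(M)=0$ for all $s\in\mathbb{R}$ and $G(s)>0$ for $s\in[0,M)$, for some $M>0$. Let $L>0$, $I:=(-L,L)$, and assume that for some $m_0\ge0$ all minimizers of $\mathcal{E}(\cdot,I)$ in $H^1_{m_0}(I)$ are non-odd. Then there exists $\varepsilon>0$ such that, for each $m\in(m_0-\varepsilon,m_0+\varepsilon)\cap[0,\infty)$, the functional $\mathcal{E}(\cdot,I)$ admits non-odd minimizers in $H^1_m(I)$.
   Context: $H^1_m(I):=\{u\in H^1(I):u(-L)=-m,\ u(L)=m\}$ and $\mathcal{E}(u,I):=\int_{-L}^L\{\tfrac12(u')^2a(x)+G(u)b(x)\}\,dx$; minimizer means absolute minimizer. *)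

theory Defs
  imports "HOL-Analysis.Analysis"
begin

definition weak_deriv_on :: "real \<Rightarrow> (real \<Rightarrow> real) \<Rightarrow> (real \<Rightarrow> real) \<Rightarrow> bool" where
  "weak_deriv_on L u g \<longleftrightarrow>
     g absolutely_integrable_on {-L..L} \<and>
     (\<lambda>x. (g x)\<^sup>2) integrable_on {-L..L} \<and>
     (\<forall>x\<in>{-L..L}. u x = u (-L) + integral {-L..x} g)"

text \<open>H^1(I), I = (-L,L), elements identified with their continuous representative.\<close>
definition H1 :: "real \<Rightarrow> (real \<Rightarrow> real) \<Rightarrow> bool" where
  "H1 L u \<longleftrightarrow> (\<exists>g. weak_deriv_on L u g)"

definition H1_m :: "real \<Rightarrow> real \<Rightarrow> (real \<Rightarrow> real) set" where
  "H1_m L m = {u. H1 L u \<and> u (-L) = - m \<and> u L = m}"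

definition wderiv :: "real \<Rightarrow> (real \<Rightarrow> real) \<Rightarrow> real \<Rightarrow> real" where
  "wderiv L u = (SOME g. weak_deriv_on L u g)"

definition energy :: "(real \<Rightarrow> real) \<Rightarrow> (real \<Rightarrow> real) \<Rightarrow> (real \<Rightarrow> real) \<Rightarrow> real
    \<Rightarrow> (real \<Rightarrow> real) \<Rightarrow> real" where
  "energy a b G L u =
     integral {-L..L} (\<lambda>x. (1/2) * (wderiv L u x)\<^sup>2 * a x + G (u x) * b x)"

definition is_minimizer :: "(real \<Rightarrow> real) \<Rightarrow> (real \<Rightarrow> real) \<Rightarrow> (real \<Rightarrow> real) \<Rightarrow> real
    \<Rightarrow> real \<Rightarrow> (real \<Rightarrow> real) \<Rightarrow> bool" where
  "is_minimizer a b G L m u \<longleftrightarrow>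
     u \<in> H1_m L m \<and> (\<forall>v\<in>H1_m L m. energy a b G L u \<le> energy a b G L v)"

definition odd_on :: "real \<Rightarrow> (real \<Rightarrow> real) \<Rightarrow> bool" where
  "odd_on L u \<longleftrightarrow> (\<forall>x\<in>{-L<..<L}. u (-x) = - u x)"

definition even_fun :: "(real \<Rightarrow> real) \<Rightarrow> bool" where
  "even_fun f \<longleftrightarrow> (\<forall>x. f (-x) = f x)"

definition C11_loc :: "(real \<Rightarrow> real) \<Rightarrow> bool" where
  "C11_loc G \<longleftrightarrow> (\<forall>x. G differentiable at x) \<and>
     (\<forall>R>0. \<exists>C. \<forall>x y. \<bar>x\<bar> \<le> R \<longrightarrow> \<bar>y\<bar> \<le> R \<longrightarrow>
        \<bar>deriv G x - deriv G y\<bar> \<le> C * \<bar>x - y\<bar>)"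

end

theory Submission
  imports Defs "HOL-Complex_Analysis.Great_Picard"
begin

text \<open>Argue by contradiction: otherwise there are masses \<open>m\<^sub>k \<rightarrow> m\<^sub>0\<close> at which every
  minimizer is odd. Minimizers exist for every mass by the direct method: an energy bound
  gives a uniform bound and a uniform \<open>1/2\<close>-Hoelder bound, Arzela-Ascoli extracts a
  uniformly convergent subsequence, and the weighted Dirichlet integral is lower
  semicontinuous along it because it is the supremum of its dyadic difference-quotient
  approximations. Adding the linear function \<open>(m\<^sub>k - m\<^sub>0) x / L\<close> to a minimizer at \<open>m\<^sub>0\<close>
  gives competitors at \<open>m\<^sub>k\<close> whose energies tend to the minimal energy at \<open>m\<^sub>0\<close>, so a
  subsequence of odd minimizers at \<open>m\<^sub>k\<close> converges to a minimizer at \<open>m\<^sub>0\<close>, which is odd as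
  a pointwise limit of odd functions.\<close>

section \<open>Integrals over intervals\<close>

lemma discriminant_le_if_quadratic_nonneg:
  fixes A B W :: real
  assumes "\<And>t. A - 2*t*B + t^2*W \<ge> 0" "W \<ge> 0"
  shows "B^2 \<le> A * W"
proof (cases "W = 0")
  case True
  have "B = 0"
  proof (rule ccontr)
    assume "B \<noteq> 0"
    have "A - 2*((A+1)/(2*B))*B + ((A+1)/(2*B))^2*W \<ge> 0" using assms(1) .
    with True \<open>B\<noteq>0\<close> show False by (simp add: field_simps)
  qed
  then show ?thesis using True by simp
next
  case False
  then have W: "W > 0" using assms(2) by simp
  have "A - 2*(B/W)*B + (B/W)^2*W \<ge> 0" using assms(1) .
  then have "A - B^2/W \<ge> 0" using W by (simp add: field_simps power2_eq_square)
  then show ?thesis using W by (simp add: field_simps)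
qed

lemma weighted_Cauchy_Schwarz_integral:
  fixes w g :: "real \<Rightarrow> real"
  assumes wg: "(\<lambda>x. w x * (g x)^2) integrable_on {p..q}"
    and g: "g integrable_on {p..q}"
    and iw: "(\<lambda>x. 1 / w x) integrable_on {p..q}"
    and w_pos: "\<And>x. w x > 0"
  shows "(integral {p..q} g)^2 \<le> integral {p..q} (\<lambda>x. 1 / w x) * integral {p..q} (\<lambda>x. w x * (g x)^2)"
proof -
  let ?A = "integral {p..q} (\<lambda>x. w x * (g x)^2)" and ?W = "integral {p..q} (\<lambda>x. 1 / w x)"
  have "?A - 2*t*integral {p..q} g + t^2 * ?W \<ge> 0" for t
  proof -
    have i: "(\<lambda>x. (2*t) * g x) integrable_on {p..q}" "(\<lambda>x. t^2 * (1 / w x)) integrable_on {p..q}"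
      by (intro integrable_on_mult_right g iw)+
    have "integral {p..q} (\<lambda>x. w x * (g x)^2 - (2*t) * g x + t^2 * (1 / w x))
        = ?A - integral {p..q} (\<lambda>x. (2*t) * g x) + integral {p..q} (\<lambda>x. t^2 * (1 / w x))"
      by (simp only: integral_add[OF integrable_diff[OF wg i(1)] i(2)] integral_diff[OF wg i(1)])
    also have "\<dots> = ?A - 2*t*integral {p..q} g + t^2 * ?W"
      by (simp only: integral_mult_right)
    finally have "?A - 2*t*integral {p..q} g + t^2 * ?W
        = integral {p..q} (\<lambda>x. w x * (g x)^2 - (2*t) * g x + t^2 * (1 / w x))" ..
    also have "\<dots> \<ge> 0"
    proof (rule integral_nonneg)
      show "(\<lambda>x. w x * (g x)^2 - (2*t) * g x + t^2 * (1 / w x)) integrable_on {p..q}"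
        by (intro integrable_add integrable_diff wg i)
      fix x
      have "w x * (g x)^2 - (2*t) * g x + t^2 * (1 / w x) = w x * (g x - t / w x)^2"
        using w_pos[of x] by (simp add: field_simps power2_eq_square)
      then show "0 \<le> w x * (g x)^2 - (2*t) * g x + t^2 * (1 / w x)"
        using w_pos[of x] by simp
    qed
    finally show ?thesis .
  qed
  moreover have "?W \<ge> 0"
    using iw w_pos by (intro integral_nonneg) (auto simp: less_imp_le)
  ultimately have "(integral {p..q} g)^2 \<le> ?A * ?W"
    by (rule discriminant_le_if_quadratic_nonneg)
  then show ?thesis by (simp add: mult.commute)
qed

lemma integral_consecutive_intervals:
  fixes f :: "real \<Rightarrow> real" and t :: "nat \<Rightarrow> real"
  assumes mono: "\<And>j. t j \<le> t (Suc j)"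
    and int: "\<And>j. j < N \<Longrightarrow> f integrable_on {t j..t (Suc j)}"
  shows "f integrable_on {t 0..t N} \<and> integral {t 0..t N} f = (\<Sum>j<N. integral {t j..t (Suc j)} f)"
  using int
proof (induction N)
  case 0
  then show ?case using integrable_on_refl[of f "t 0"] by simp
next
  case (Suc N)
  then have IH: "f integrable_on {t 0..t N}" "integral {t 0..t N} f = (\<Sum>j<N. integral {t j..t (Suc j)} f)"
    by auto
  have le: "t 0 \<le> t N" using mono by (induction N) (auto intro: order_trans)
  have "f integrable_on {t 0..t (Suc N)}"
    using Henstock_Kurzweil_Integration.integrable_combine[OF le mono IH(1)] Suc.prems by simp
  moreover have "integral {t 0..t (Suc N)} f = integral {t 0..t N} f + integral {t N..t (Suc N)} f"
    using Henstock_Kurzweil_Integration.integral_combine[OF le mono calculation] by simp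
  ultimately show ?case using IH by simp
qed

lemma integrable_integral_eq_on_atLeastLessThan:
  fixes f \<phi> :: "real \<Rightarrow> real"
  assumes "\<phi> integrable_on {p..q}" "\<And>x. x \<in> {p..<q} \<Longrightarrow> f x = \<phi> x"
  shows "f integrable_on {p..q} \<and> integral {p..q} f = integral {p..q} \<phi>"
proof -
  have "f x = \<phi> x" "\<phi> x = f x" if "x \<in> {p..q} - {q}" for x using assms(2) that by auto
  then show ?thesis
    using integrable_spike[OF assms(1) negligible_sing] integral_spike[OF negligible_sing] by metis
qed

lemma absolutely_integrable_continuous_mult:
  fixes f g :: "real \<Rightarrow> real"
  assumes "continuous_on {p..q} f" "g absolutely_integrable_on {p..q}"
  shows "(\<lambda>x. f x * g x) absolutely_integrable_on {p..q}"
proof (rule absolutely_integrable_bounded_measurable_product_real)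
  show "f \<in> borel_measurable (lebesgue_on {p..q})"
    by (rule continuous_imp_measurable_on_sets_lebesgue[OF assms(1)]) simp
  show "bounded (f ` {p..q})"
    by (rule compact_imp_bounded, rule compact_continuous_image[OF assms(1)]) simp
qed (use assms in auto)

lemma integral_indicator_Icc_lebesgue_on:
  fixes f :: "real \<Rightarrow> real"
  assumes fi: "integrable (lebesgue_on {p..q}) f" and py: "p \<le> y" "y \<le> q"
  shows "(\<integral>x. indicator {p..y} x * f x \<partial>lebesgue_on {p..q}) = integral {p..y} f"
proof -
  have sets: "{p..y} \<in> sets (lebesgue_on {p..q})"
    using py by (subst sets_restrict_space_iff) auto
  have ii: "integrable (lebesgue_on {p..q}) (\<lambda>x. indicator {p..y} x * f x)"
    using integrable_real_mult_indicator[OF sets fi] by (simp add: mult.commute)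
  have "(\<integral>x. indicator {p..y} x * f x \<partial>lebesgue_on {p..q}) = integral {p..q} (\<lambda>x. indicator {p..y} x * f x)"
    by (rule lebesgue_integral_eq_integral[OF ii]) simp
  also have "\<dots> = integral {p..q} (\<lambda>x. if x \<in> {p..y} then f x else 0)"
    by (rule integral_cong) (simp add: indicator_def)
  also have "\<dots> = integral ({p..y} \<inter> {p..q}) f"
    by (rule Henstock_Kurzweil_Integration.integral_restrict_Int)
  also have "{p..y} \<inter> {p..q} = {p..y}" using py by auto
  finally show ?thesis .
qed

lemma absolutely_integrable_on_Icc_iff_lebesgue_on:
  fixes f :: "real \<Rightarrow> real"
  shows "f absolutely_integrable_on {p..q} \<longleftrightarrow> integrable (lebesgue_on {p..q}) f"
proof
  assume "f absolutely_integrable_on {p..q}"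
  then show "integrable (lebesgue_on {p..q}) f" by (rule absolutely_integrable_imp_integrable) simp
next
  assume "integrable (lebesgue_on {p..q}) f"
  then show "f absolutely_integrable_on {p..q}"
    by (subst absolutely_integrable_measurable_real) auto
qed

section \<open>Measure-theoretic tools\<close>

lemma emeasure_density_greaterThan:
  fixes f :: "real \<Rightarrow> real"
  assumes [measurable]: "f \<in> borel_measurable borel" and f_nonneg: "\<And>x. f x \<ge> 0"
    and fi: "integrable lborel (\<lambda>x. indicator {c<..} x * f x)"
  shows "emeasure (density lborel (\<lambda>x. ennreal (f x))) {c<..} = ennreal (\<integral>x. indicator {c<..} x * f x \<partial>lborel)"
proof -
  have "emeasure (density lborel (\<lambda>x. ennreal (f x))) {c<..} = (\<integral>\<^sup>+x. ennreal (f x) * indicator {c<..} x \<partial>lborel)"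
    by (rule emeasure_density) auto
  also have "\<dots> = (\<integral>\<^sup>+x. ennreal (indicator {c<..} x * f x) \<partial>lborel)"
    by (rule nn_integral_cong) (auto split: split_indicator)
  also have "\<dots> = ennreal (\<integral>x. indicator {c<..} x * f x \<partial>lborel)"
    by (rule nn_integral_eq_integral[OF fi]) (use f_nonneg in \<open>auto split: split_indicator\<close>)
  finally show ?thesis .
qed

lemma AE_zero_if_integrals_greaterThan_zero:
  fixes h :: "real \<Rightarrow> real"
  assumes hi: "integrable lborel h" and [measurable]: "h \<in> borel_measurable borel"
    and hz: "\<And>c. (\<integral>x. indicator {c<..} x * h x \<partial>lborel) = 0"
  shows "AE x in lborel. h x = 0"
proof -
  define p where "p x = max (h x) 0" for x
  define n where "n x = max (- h x) 0" for x
  have [measurable]: "p \<in> borel_measurable borel" "n \<in> borel_measurable borel"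
    unfolding p_def n_def by auto
  have pi: "integrable lborel p" and ni: "integrable lborel n"
    unfolding p_def n_def using hi by auto
  have pic: "integrable lborel (\<lambda>x. indicator {c<..} x * p x)"
    and nic: "integrable lborel (\<lambda>x. indicator {c<..} x * n x)" for c
    using integrable_mult_indicator[OF _ pi, of "{c<..}"] integrable_mult_indicator[OF _ ni, of "{c<..}"]
    by simp_all
  have "(\<integral>x. indicator {c<..} x * p x \<partial>lborel) = (\<integral>x. indicator {c<..} x * n x \<partial>lborel)" for c
  proof -
    have "(\<integral>x. indicator {c<..} x * p x \<partial>lborel) - (\<integral>x. indicator {c<..} x * n x \<partial>lborel)
        = (\<integral>x. indicator {c<..} x * p x - indicator {c<..} x * n x \<partial>lborel)"
      using pic nic by simp
    also have "\<dots> = (\<integral>x. indicator {c<..} x * h x \<partial>lborel)"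
      by (rule Bochner_Integration.integral_cong) (auto simp: p_def n_def split: split_indicator)
    finally have "(\<integral>x. indicator {c<..} x * p x \<partial>lborel) - (\<integral>x. indicator {c<..} x * n x \<partial>lborel) = 0"
      using hz[of c] by simp
    then show ?thesis by simp
  qed
  \<comment> \<open>so the positive and negative parts of \<open>h\<close> are densities of the same measure\<close>
  then have "density lborel (\<lambda>x. ennreal (p x)) = density lborel (\<lambda>x. ennreal (n x))"
    using emeasure_density_greaterThan[OF _ _ pic] emeasure_density_greaterThan[OF _ _ nic]
    by (intro measure_eqI_lessThan) (auto simp: p_def n_def)
  moreover have "integral\<^sup>N lborel (\<lambda>x. ennreal (p x)) \<noteq> \<infinity>"
    using nn_integral_eq_integral[OF pi] by (simp add: p_def)
  ultimately have "AE x in lborel. ennreal (p x) = ennreal (n x)"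
    using finite_density_unique[of "\<lambda>x. ennreal (p x)" lborel "\<lambda>x. ennreal (n x)"] by simp
  then show ?thesis
    by (rule AE_mp) (auto simp: p_def n_def intro!: AE_I2 split: if_splits)
qed

lemma AE_zero_if_integrals_greaterThan_zero_lebesgue:
  fixes h :: "real \<Rightarrow> real"
  assumes hi: "integrable lebesgue h"
    and hz: "\<And>c. (\<integral>x. indicator {c<..} x * h x \<partial>lebesgue) = 0"
  shows "AE x in lborel. h x = 0"
proof -
  \<comment> \<open>a Borel representative \<open>h'\<close> of \<open>h\<close>, needed to compare measures on the Borel sets\<close>
  obtain h' where h'm: "h' \<in> borel_measurable lborel" and hh': "AE x in lborel. h x = h' x"
    using completion_ex_borel_measurable_real borel_measurable_integrable[OF hi] by fastforce
  have h'b[measurable]: "h' \<in> borel_measurable borel" using h'm by simp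
  have hh'c: "AE x in completion lborel. h x = h' x" by (rule AE_completion[OF hh'])
  have h'i: "integrable lborel h'"
    using integrable_cong_AE_imp[OF hi _ hh'c] measurable_completion[OF h'm]
      integrable_completion[OF h'm] by simp
  have "(\<integral>x. indicator {c<..} x * h' x \<partial>lborel) = 0" for c
  proof -
    have ic: "integrable (completion lborel) (\<lambda>x. indicator {c<..} x * h x)"
      using integrable_mult_indicator[OF _ hi, of "{c<..}"] by simp
    have "(\<integral>x. indicator {c<..} x * h' x \<partial>lborel) = (\<integral>x. indicator {c<..} x * h' x \<partial>completion lborel)"
      by (rule integral_completion[symmetric]) simp
    also have "\<dots> = (\<integral>x. indicator {c<..} x * h x \<partial>completion lborel)"
    proof (rule integral_cong_AE)
      show "(\<lambda>x. indicator {c<..} x * h' x) \<in> borel_measurable (completion lborel)"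
        by (rule measurable_completion) simp
      show "(\<lambda>x. indicator {c<..} x * h x) \<in> borel_measurable (completion lborel)"
        using borel_measurable_integrable[OF ic] .
      show "AE x in completion lborel. indicator {c<..} x * h' x = indicator {c<..} x * h x"
        using hh'c by (auto elim!: AE_mp)
    qed
    finally show ?thesis using hz[of c] by simp
  qed
  then have "AE x in lborel. h' x = 0"
    by (rule AE_zero_if_integrals_greaterThan_zero[OF h'i h'b])
  then show ?thesis
    using hh' by (auto elim: AE_mp)
qed

lemma negligible_nonzero_if_integrals_Icc_zero:
  fixes h :: "real \<Rightarrow> real"
  assumes habs: "h absolutely_integrable_on {p..q}"
    and hz: "\<And>c. c \<in> {p..q} \<Longrightarrow> integral {c..q} h = 0"
  obtains N where "negligible N" "\<And>x. x \<in> {p..q} - N \<Longrightarrow> h x = 0"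
proof -
  define h0 where "h0 x = (if x \<in> {p..q} then h x else 0)" for x
  have h0i: "integrable lebesgue h0"
    using habs absolutely_integrable_restrict_UNIV[of "{p..q}" h]
    unfolding h0_def set_integrable_def by simp
  have "(\<integral>x. indicator {c<..} x * h0 x \<partial>lebesgue) = 0" for c
  proof -
    have "set_integrable lebesgue UNIV (\<lambda>x. indicator {c<..} x * h0 x)"
      using integrable_mult_indicator[OF _ h0i, of "{c<..}"] unfolding set_integrable_def by simp
    from set_lebesgue_integral_eq_integral(2)[OF this]
    have "(\<integral>x. indicator {c<..} x * h0 x \<partial>lebesgue) = integral UNIV (\<lambda>x. indicator {c<..} x * h0 x)"
      by (simp add: set_lebesgue_integral_def)
    also have "\<dots> = integral UNIV (\<lambda>x. if x \<in> {max c p..q} then h x else 0)"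
      by (rule integral_spike[of "{c}"]) (auto simp: h0_def indicator_def)
    also have "\<dots> = integral {max c p..q} h"
      by (rule integral_restrict_UNIV)
    also have "\<dots> = 0"
      using hz[of "max c p"] by (cases "max c p \<le> q") auto
    finally show ?thesis .
  qed
  then have "AE x in lborel. h0 x = 0"
    by (rule AE_zero_if_integrals_greaterThan_zero_lebesgue[OF h0i])
  then obtain N where N: "{x \<in> space lborel. h0 x \<noteq> 0} \<subseteq> N" "N \<in> null_sets lborel"
    by (auto elim!: AE_E simp: null_sets_def)
  have "negligible N"
    using N(2) null_sets_completionI[of N lborel] by (simp add: negligible_iff_null_sets)
  moreover have "h x = 0" if "x \<in> {p..q} - N" for x
    using N(1) that unfolding h0_def by force
  ultimately show thesis by (rule that)
qed

lemma Fatou_integrable_le: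
  fixes f :: "nat \<Rightarrow> 'a \<Rightarrow> real"
  assumes fm: "\<And>k. f k \<in> borel_measurable M" and Fm: "F \<in> borel_measurable M"
    and f_nonneg: "\<And>k x. f k x \<ge> 0" and fi: "\<And>k. integrable M (f k)"
    and fC: "\<And>k. (\<integral>x. f k x \<partial>M) \<le> C"
    and lim: "AE x in M. (\<lambda>k. f k x) \<longlonglongrightarrow> F x"
  shows "integrable M F \<and> (\<integral>x. F x \<partial>M) \<le> C"
proof -
  have C0: "C \<ge> 0"
    using fC[of 0] integral_nonneg_AE[of "f 0" M] f_nonneg by (meson AE_I2 order_trans)
  have F0: "AE x in M. F x \<ge> 0"
    using lim by (rule AE_mp) (auto intro!: AE_I2 LIMSEQ_le_const f_nonneg)
  have "(\<integral>\<^sup>+x. ennreal (F x) \<partial>M) = (\<integral>\<^sup>+x. liminf (\<lambda>k. ennreal (f k x)) \<partial>M)"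
  proof (rule nn_integral_cong_AE)
    show "AE x in M. ennreal (F x) = liminf (\<lambda>k. ennreal (f k x))"
      using lim by (rule AE_mp) (auto intro!: AE_I2 lim_imp_Liminf[symmetric] tendsto_ennrealI)
  qed
  also have "\<dots> \<le> liminf (\<lambda>k. \<integral>\<^sup>+x. ennreal (f k x) \<partial>M)"
    by (rule nn_integral_liminf) (use fm in simp)
  also have "\<dots> = liminf (\<lambda>k. ennreal (\<integral>x. f k x \<partial>M))"
    by (subst nn_integral_eq_integral[OF fi]) (auto simp: f_nonneg)
  also have "\<dots> \<le> limsup (\<lambda>k. ennreal (\<integral>x. f k x \<partial>M))"
    by (rule Liminf_le_Limsup) simp
  also have "\<dots> \<le> ennreal C"
    by (rule Limsup_bounded) (use fC in \<open>auto intro!: always_eventually ennreal_leI\<close>)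
  finally have le: "(\<integral>\<^sup>+x. ennreal (F x) \<partial>M) \<le> ennreal C" .
  have Fi: "integrable M F"
  proof (rule integrableI_bounded[OF Fm])
    have "(\<integral>\<^sup>+x. ennreal (norm (F x)) \<partial>M) = (\<integral>\<^sup>+x. ennreal (F x) \<partial>M)"
      by (rule nn_integral_cong_AE, rule AE_mp[OF F0]) (auto intro!: AE_I2)
    then show "(\<integral>\<^sup>+x. ennreal (norm (F x)) \<partial>M) < \<infinity>" using le by (simp add: le_less_trans)
  qed
  have "ennreal (\<integral>x. F x \<partial>M) \<le> ennreal C"
    using le nn_integral_eq_integral[OF Fi F0] by simp
  then show ?thesis using C0 Fi by (simp add: ennreal_le_iff)
qed

lemma convergent_if_summable_abs_differences:
  fixes s :: "nat \<Rightarrow> real"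
  assumes sd: "summable (\<lambda>k. \<bar>s (Suc k) - s k\<bar>)"
  shows "convergent s" "\<bar>s k\<bar> \<le> \<bar>s 0\<bar> + (\<Sum>i. \<bar>s (Suc i) - s i\<bar>)"
proof -
  have tel: "s k = s 0 + (\<Sum>i<k. s (Suc i) - s i)" for k
    using sum_lessThan_telescope[of s k] by simp
  have "summable (\<lambda>k. s (Suc k) - s k)"
    by (rule summable_rabs_cancel) (use sd in simp)
  then have "(\<lambda>k. s 0 + (\<Sum>i<k. s (Suc i) - s i)) \<longlonglongrightarrow> s 0 + (\<Sum>i. s (Suc i) - s i)"
    by (intro tendsto_add tendsto_const summable_LIMSEQ)
  then show "convergent s" unfolding tel[symmetric] by (auto simp: convergent_def)
  have "\<bar>s k\<bar> \<le> \<bar>s 0\<bar> + \<bar>\<Sum>i<k. s (Suc i) - s i\<bar>"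
    by (subst tel) (rule abs_triangle_ineq)
  also have "\<bar>\<Sum>i<k. s (Suc i) - s i\<bar> \<le> (\<Sum>i<k. \<bar>s (Suc i) - s i\<bar>)"
    by (rule sum_abs)
  also have "\<dots> \<le> (\<Sum>i. \<bar>s (Suc i) - s i\<bar>)"
    by (rule sum_le_suminf[OF sd]) auto
  finally show "\<bar>s k\<bar> \<le> \<bar>s 0\<bar> + (\<Sum>i. \<bar>s (Suc i) - s i\<bar>)" by simp
qed

lemma AE_convergent_dominated_if_geometric_L1_differences:
  fixes h :: "nat \<Rightarrow> 'a \<Rightarrow> real"
  assumes hi: "\<And>k. integrable M (h k)"
    and fast: "\<And>k. (\<integral>x. \<bar>h (Suc k) x - h k x\<bar> \<partial>M) \<le> K * (1/2)^k"
  obtains D where "integrable M D" "AE x in M. convergent (\<lambda>k. h k x) \<and> (\<forall>k. \<bar>h k x\<bar> \<le> D x)"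
proof -
  define d where "d k x = \<bar>h (Suc k) x - h k x\<bar>" for k x
  have [measurable]: "h k \<in> borel_measurable M" for k using hi by (rule borel_measurable_integrable)
  have dm[measurable]: "d k \<in> borel_measurable M" for k unfolding d_def by measurable
  have di: "integrable M (d k)" for k unfolding d_def using hi by auto
  have "0 \<le> (\<integral>x. d 0 x \<partial>M)" by (rule integral_nonneg_AE) (auto simp: d_def)
  moreover have "(\<integral>x. d 0 x \<partial>M) \<le> K" using fast[of 0] by (simp add: d_def)
  ultimately have K0: "K \<ge> 0" by linarith
  define F where "F x = (\<Sum>k. ennreal (d k x))" for x
  have Fm[measurable]: "F \<in> borel_measurable M" unfolding F_def by measurable
  have "(\<integral>\<^sup>+x. F x \<partial>M) = (\<Sum>k. \<integral>\<^sup>+x. ennreal (d k x) \<partial>M)"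
    unfolding F_def by (rule nn_integral_suminf) simp
  also have "\<dots> = (\<Sum>k. ennreal (\<integral>x. d k x \<partial>M))"
    by (subst nn_integral_eq_integral[OF di]) (auto simp: d_def)
  also have "\<dots> \<le> (\<Sum>k. ennreal (K * (1/2)^k))"
    by (intro suminf_le summableI) (use fast in \<open>auto simp: d_def ennreal_leI\<close>)
  also have "\<dots> = ennreal (\<Sum>k. K * (1/2)^k)"
    by (rule suminf_ennreal2) (use K0 in \<open>auto intro!: summable_mult summable_geometric\<close>)
  finally have Ffin: "(\<integral>\<^sup>+x. F x \<partial>M) \<noteq> \<infinity>" by (auto simp: top_unique)
  have aeF: "AE x in M. F x \<noteq> \<infinity>" by (rule nn_integral_PInf_AE[OF Fm Ffin])
  have Fi: "integrable M (\<lambda>x. enn2real (F x))"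
  proof (rule integrableI_bounded)
    have "(\<integral>\<^sup>+x. ennreal (norm (enn2real (F x))) \<partial>M) = (\<integral>\<^sup>+x. F x \<partial>M)"
      by (rule nn_integral_cong_AE)
         (use aeF in \<open>auto elim!: AE_mp intro!: AE_I2 simp: less_top ennreal_enn2real_if\<close>)
    then show "(\<integral>\<^sup>+x. ennreal (norm (enn2real (F x))) \<partial>M) < \<infinity>" using Ffin by (simp add: less_top)
  qed simp
  have "AE x in M. convergent (\<lambda>k. h k x) \<and> (\<forall>k. \<bar>h k x\<bar> \<le> \<bar>h 0 x\<bar> + enn2real (F x))"
    using aeF
  proof (rule AE_mp, intro AE_I2 impI)
    fix x assume Fx: "F x \<noteq> \<infinity>"
    have sd: "summable (\<lambda>k. d k x)"
      by (rule summable_suminf_not_top) (use Fx in \<open>auto simp: F_def d_def\<close>)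
    moreover have "F x = ennreal (\<Sum>k. d k x)"
      unfolding F_def by (rule suminf_ennreal2) (use sd in \<open>auto simp: d_def\<close>)
    moreover have "0 \<le> (\<Sum>k. d k x)" by (rule suminf_nonneg[OF sd]) (simp add: d_def)
    ultimately show "convergent (\<lambda>k. h k x) \<and> (\<forall>k. \<bar>h k x\<bar> \<le> \<bar>h 0 x\<bar> + enn2real (F x))"
      using convergent_if_summable_abs_differences[of "\<lambda>k. h k x"] by (simp add: d_def)
  qed
  moreover have "integrable M (\<lambda>x. \<bar>h 0 x\<bar> + enn2real (F x))" using hi[of 0] Fi by auto
  ultimately show thesis by (rule that[rotated])
qed

lemma geometric_L1_Cauchy_limit_Icc:
  fixes h :: "nat \<Rightarrow> real \<Rightarrow> real"
  assumes hi: "\<And>k. h k absolutely_integrable_on {p..q}"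
    and fast: "\<And>k. integral {p..q} (\<lambda>x. \<bar>h (Suc k) x - h k x\<bar>) \<le> K * (1/2)^k"
  obtains g where "integrable (lebesgue_on {p..q}) g"
    "AE x in lebesgue_on {p..q}. (\<lambda>k. h k x) \<longlonglongrightarrow> g x"
    "\<And>y. y \<in> {p..q} \<Longrightarrow> (\<lambda>k. integral {p..y} (h k)) \<longlonglongrightarrow> integral {p..y} g"
proof -
  let ?M = "lebesgue_on {p..q}"
  have hM: "integrable ?M (h k)" for k
    using hi[of k] absolutely_integrable_on_Icc_iff_lebesgue_on by blast
  have hm[measurable]: "h k \<in> borel_measurable ?M" for k using hM by (rule borel_measurable_integrable)
  have "(\<integral>x. \<bar>h (Suc k) x - h k x\<bar> \<partial>?M) = integral {p..q} (\<lambda>x. \<bar>h (Suc k) x - h k x\<bar>)" for k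
    by (rule lebesgue_integral_eq_integral) (use hM in auto)
  then have "(\<integral>x. \<bar>h (Suc k) x - h k x\<bar> \<partial>?M) \<le> K * (1/2)^k" for k
    using fast[of k] by simp
  then obtain D where Di: "integrable ?M D"
    and aeD: "AE x in ?M. convergent (\<lambda>k. h k x) \<and> (\<forall>k. \<bar>h k x\<bar> \<le> D x)"
    by (rule AE_convergent_dominated_if_geometric_L1_differences[OF hM])
  define g where "g x = lim (\<lambda>k. h k x)" for x
  have gm[measurable]: "g \<in> borel_measurable ?M" unfolding g_def by measurable
  have glim: "AE x in ?M. (\<lambda>k. h k x) \<longlonglongrightarrow> g x"
    using aeD by (rule AE_mp) (auto intro!: AE_I2 simp: g_def convergent_LIMSEQ_iff)
  have bnd: "AE x in ?M. norm (h k x) \<le> D x" for k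
    using aeD by (rule AE_mp) (auto intro!: AE_I2)
  have gM: "integrable ?M g"
    by (rule integrable_dominated_convergence[OF gm hm Di glim bnd])
  have "(\<lambda>k. integral {p..y} (h k)) \<longlonglongrightarrow> integral {p..y} g" if y: "y \<in> {p..q}" for y
  proof -
    have sets: "{p..y} \<in> sets ?M" using y by (subst sets_restrict_space_iff) auto
    have "(\<lambda>k. \<integral>x. indicator {p..y} x * h k x \<partial>?M) \<longlonglongrightarrow> (\<integral>x. indicator {p..y} x * g x \<partial>?M)"
    proof (rule integral_dominated_convergence[OF _ _ Di])
      show "(\<lambda>x. indicator {p..y} x * g x) \<in> borel_measurable ?M"
        using borel_measurable_integrable[OF integrable_real_mult_indicator[OF sets gM]]
        by (simp add: mult.commute)
      show "(\<lambda>x. indicator {p..y} x * h k x) \<in> borel_measurable ?M" for k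
        using borel_measurable_integrable[OF integrable_real_mult_indicator[OF sets hM]]
        by (simp add: mult.commute)
      show "AE x in ?M. (\<lambda>k. indicator {p..y} x * h k x) \<longlonglongrightarrow> indicator {p..y} x * g x"
        using glim by (rule AE_mp) (auto intro!: AE_I2 tendsto_mult_left)
      show "AE x in ?M. norm (indicator {p..y} x * h k x) \<le> D x" for k
        using aeD by (rule AE_mp)
          (auto intro!: AE_I2 simp: indicator_def abs_mult order_trans[OF _ abs_ge_zero])
    qed
    then show ?thesis
      using integral_indicator_Icc_lebesgue_on[OF hM] integral_indicator_Icc_lebesgue_on[OF gM] y by simp
  qed
  with gM glim show thesis by (rule that)
qed

section \<open>Weak derivatives\<close>

lemma weak_deriv_on_integrable:
  assumes "weak_deriv_on L u g"
  shows "g integrable_on {-L..L}" "(\<lambda>x. (g x)^2) integrable_on {-L..L}"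
    "g absolutely_integrable_on {-L..L}" "(\<lambda>x. (g x)^2) absolutely_integrable_on {-L..L}"
proof -
  show g: "g absolutely_integrable_on {-L..L}" "(\<lambda>x. (g x)^2) integrable_on {-L..L}"
    using assms unfolding weak_deriv_on_def by auto
  then show "g integrable_on {-L..L}" by (simp add: absolutely_integrable_on_def)
  show "(\<lambda>x. (g x)^2) absolutely_integrable_on {-L..L}"
    using g(2) absolutely_integrable_on_iff_nonneg[of "{-L..L}" "\<lambda>x. (g x)^2"] by simp
qed

lemma weak_deriv_on_integrable_subinterval:
  assumes "weak_deriv_on L u g" "-L \<le> y" "x \<le> L"
  shows "g integrable_on {y..x}" "(\<lambda>x. (g x)^2) integrable_on {y..x}"
proof -
  have "{y..x} \<subseteq> {-L..L}" using assms(2,3) by auto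
  then show "g integrable_on {y..x}" "(\<lambda>x. (g x)^2) integrable_on {y..x}"
    using integrable_subinterval_real weak_deriv_on_integrable(1,2)[OF assms(1)] by blast+
qed

lemma weak_deriv_on_diff:
  assumes "weak_deriv_on L u g" "-L \<le> y" "y \<le> x" "x \<le> L"
  shows "u x - u y = integral {y..x} g"
proof -
  have all: "\<forall>z\<in>{-L..L}. u z = u (-L) + integral {-L..z} g"
    using assms(1) unfolding weak_deriv_on_def by blast
  have "u x = u (-L) + integral {-L..x} g" using bspec[OF all, of x] assms by simp
  moreover have "u y = u (-L) + integral {-L..y} g" using bspec[OF all, of y] assms by simp
  moreover have "integral {-L..y} g + integral {y..x} g = integral {-L..x} g"
    using assms weak_deriv_on_integrable_subinterval(1)[OF assms(1), of "-L" x]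
    by (intro Henstock_Kurzweil_Integration.integral_combine) auto
  ultimately show ?thesis by simp
qed

lemma weak_deriv_on_continuous:
  assumes "weak_deriv_on L u g"
  shows "continuous_on {-L..L} u"
proof -
  have "continuous_on {-L..L} (\<lambda>x. u (-L) + integral {-L..x} g)"
    by (intro continuous_intros indefinite_integral_continuous_1 weak_deriv_on_integrable[OF assms])
  then show ?thesis
  proof (rule continuous_on_eq)
    show "u (-L) + integral {-L..x} g = u x" if "x \<in> {-L..L}" for x
      using assms that unfolding weak_deriv_on_def by (metis (no_types))
  qed
qed

lemma weak_deriv_on_Holder:
  assumes "weak_deriv_on L u g" "x \<in> {-L..L}" "y \<in> {-L..L}"
  shows "\<bar>u x - u y\<bar> \<le> sqrt (integral {-L..L} (\<lambda>x. (g x)^2)) * sqrt \<bar>x - y\<bar>"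
proof -
  have sq: "(u x - u y)^2 \<le> (x - y) * integral {-L..L} (\<lambda>x. (g x)^2)" if "y \<le> x"
    and "x \<in> {-L..L}" "y \<in> {-L..L}" for x y
  proof -
    have "(integral {y..x} g)^2 \<le> integral {y..x} (\<lambda>x. 1 / 1) * integral {y..x} (\<lambda>x. 1 * (g x)^2)"
      using that weak_deriv_on_integrable_subinterval[OF assms(1), of y x]
      by (intro weighted_Cauchy_Schwarz_integral) auto
    also have "\<dots> \<le> (x - y) * integral {-L..L} (\<lambda>x. (g x)^2)"
      using that weak_deriv_on_integrable_subinterval(2)[OF assms(1), of y x]
        weak_deriv_on_integrable(2)[OF assms(1)]
      by (auto intro!: mult_left_mono integral_subset_le)
    finally show ?thesis using weak_deriv_on_diff[OF assms(1), of y x] that by simp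
  qed
  have "(u x - u y)^2 \<le> \<bar>x - y\<bar> * integral {-L..L} (\<lambda>x. (g x)^2)"
    using sq[of y x] sq[of x y] assms(2,3) by (cases "y \<le> x") (auto simp: power2_commute)
  then have "sqrt ((u x - u y)^2) \<le> sqrt (\<bar>x - y\<bar> * integral {-L..L} (\<lambda>x. (g x)^2))"
    using real_sqrt_le_mono by blast
  then show ?thesis by (simp add: real_sqrt_mult mult.commute)
qed

lemma weak_deriv_on_unique:
  assumes w1: "weak_deriv_on L u g1" and w2: "weak_deriv_on L u g2"
  obtains N where "negligible N" "\<And>x. x \<in> {-L..L} - N \<Longrightarrow> g1 x = g2 x"
proof -
  have "integral {c..L} (\<lambda>x. g1 x - g2 x) = 0" if "c \<in> {-L..L}" for c
    using that weak_deriv_on_diff[OF w1, of c L] weak_deriv_on_diff[OF w2, of c L]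
      weak_deriv_on_integrable_subinterval(1)[OF w1, of c L]
      weak_deriv_on_integrable_subinterval(1)[OF w2, of c L]
    by (simp add: integral_diff)
  moreover have "(\<lambda>x. g1 x - g2 x) absolutely_integrable_on {-L..L}"
    by (rule set_integral_diff(1)[OF weak_deriv_on_integrable(3)[OF w1] weak_deriv_on_integrable(3)[OF w2]])
  ultimately obtain N where "negligible N" "\<And>x. x \<in> {-L..L} - N \<Longrightarrow> g1 x - g2 x = 0"
    using negligible_nonzero_if_integrals_Icc_zero by blast
  then show thesis using that by simp
qed

lemma weak_deriv_on_integral_cong:
  assumes "weak_deriv_on L u g1" "weak_deriv_on L u g2"
  shows "integral {-L..L} (\<lambda>x. F x (g1 x)) = integral {-L..L} (\<lambda>x. F x (g2 x))"
proof -
  obtain N where "negligible N" "\<And>x. x \<in> {-L..L} - N \<Longrightarrow> g1 x = g2 x"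
    using weak_deriv_on_unique[OF assms] by blast
  then show ?thesis by (intro integral_spike[of N]) auto
qed

lemma weak_deriv_on_wderiv:
  assumes "H1 L u"
  shows "weak_deriv_on L u (wderiv L u)"
  using assms unfolding H1_def wderiv_def by (rule someI_ex)

lemma weak_deriv_on_const: "weak_deriv_on L (\<lambda>x. c) (\<lambda>x. 0)"
  by (simp add: weak_deriv_on_def integrable_0)

lemma weak_deriv_on_add_linear:
  assumes w: "weak_deriv_on L v g" and "L > 0"
  shows "weak_deriv_on L (\<lambda>x. v x + d * x / L) (\<lambda>x. g x + d / L)"
proof -
  have ca: "(\<lambda>x. d / L) absolutely_integrable_on {-L..L}"
    by (rule absolutely_integrable_continuous_real) simp
  have "(\<lambda>x. (g x)^2 + 2 * (d / L) * g x + (d/L)^2) integrable_on {-L..L}"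
    using weak_deriv_on_integrable[OF w]
    by (intro integrable_add integrable_on_mult_right integrable_on_const) auto
  moreover have "(\<lambda>x. (g x + d / L)^2) = (\<lambda>x. (g x)^2 + 2 * (d / L) * g x + (d/L)^2)"
    by (rule ext) (simp add: power2_eq_square algebra_simps)
  moreover have "v x + d * x / L = (v (-L) + d * (-L) / L) + integral {-L..x} (\<lambda>x. g x + d / L)"
    if x: "x \<in> {-L..L}" for x
  proof -
    have "integral {-L..x} (\<lambda>x. g x + d / L) = integral {-L..x} g + integral {-L..x} (\<lambda>x. d / L)"
      using x weak_deriv_on_integrable_subinterval(1)[OF w, of "-L" x]
      by (intro integral_add) (auto simp: integrable_on_const)
    also have "\<dots> = v x - v (-L) + (x + L) * (d / L)"
      using weak_deriv_on_diff[OF w, of "-L" x] x by simp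
    finally show ?thesis using \<open>L > 0\<close> by (simp add: field_simps)
  qed
  ultimately show ?thesis
    using set_integral_add(1)[OF weak_deriv_on_integrable(3)[OF w] ca]
    unfolding weak_deriv_on_def by simp
qed

section \<open>The energy\<close>

locale weighted_energy =
  fixes a b G :: "real \<Rightarrow> real" and L :: real
  assumes a_cont: "continuous_on UNIV a" and a_pos: "\<And>x. a x > 0"
    and b_cont: "continuous_on UNIV b" and b_pos: "\<And>x. b x > 0"
    and G_cont: "continuous_on UNIV G" and G_nonneg: "\<And>s. G s \<ge> 0"
    and L_pos: "L > 0"
begin

definition dirichlet :: "(real \<Rightarrow> real) \<Rightarrow> real" where
  "dirichlet g = integral {-L..L} (\<lambda>x. a x * (g x)^2)"

definition potential :: "(real \<Rightarrow> real) \<Rightarrow> real" where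
  "potential u = integral {-L..L} (\<lambda>x. G (u x) * b x)"

lemma continuous_on_a: "continuous_on S a"
  using a_cont by (rule continuous_on_subset) auto

lemma continuous_on_b: "continuous_on S b"
  using b_cont by (rule continuous_on_subset) auto

lemma continuous_on_G: "continuous_on S G"
  using G_cont by (rule continuous_on_subset) auto

lemma integrable_inverse_a: "(\<lambda>x. 1 / a x) integrable_on {p..q}"
  using a_pos by (intro integrable_continuous_real continuous_intros continuous_on_a)
    (auto simp: less_imp_neq[symmetric])

lemma a_lower_bound:
  obtains c where "c > 0" "\<And>x. x \<in> {-L..L} \<Longrightarrow> c \<le> a x"
proof -
  have "{-L..L} \<noteq> {}" using L_pos by simp
  then obtain x0 where "x0 \<in> {-L..L}" "\<forall>x\<in>{-L..L}. a x0 \<le> a x"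
    using continuous_attains_inf[OF compact_Icc _ continuous_on_a] by blast
  then show thesis using that a_pos[of x0] by blast
qed

lemma dirichlet_integrable:
  assumes "weak_deriv_on L u g"
  shows "(\<lambda>x. a x * (g x)^2) integrable_on {-L..L}"
  using absolutely_integrable_continuous_mult[OF continuous_on_a weak_deriv_on_integrable(4)[OF assms]]
  by (simp add: absolutely_integrable_on_def)

lemma dirichlet_nonneg: "weak_deriv_on L u g \<Longrightarrow> dirichlet g \<ge> 0"
  unfolding dirichlet_def
  by (rule integral_nonneg[OF dirichlet_integrable]) (auto intro!: mult_nonneg_nonneg less_imp_le[OF a_pos])

lemma square_integral_le_dirichlet:
  obtains c where "c > 0" "\<And>u g. weak_deriv_on L u g \<Longrightarrow> c * integral {-L..L} (\<lambda>x. (g x)^2) \<le> dirichlet g"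
proof -
  obtain c where c: "c > 0" "\<And>x. x \<in> {-L..L} \<Longrightarrow> c \<le> a x" using a_lower_bound by blast
  have "integral {-L..L} (\<lambda>x. c * (g x)^2) \<le> dirichlet g" if w: "weak_deriv_on L u g" for u g
    unfolding dirichlet_def
    by (rule integral_le)
      (use c weak_deriv_on_integrable(2)[OF w] dirichlet_integrable[OF w]
        in \<open>auto intro: mult_right_mono integrable_on_mult_right\<close>)
  then show thesis using that[OF c(1)] by simp
qed

lemma potential_integrable:
  assumes "continuous_on {-L..L} u"
  shows "(\<lambda>x. G (u x) * b x) integrable_on {-L..L}"
  by (intro integrable_continuous_real continuous_intros continuous_on_compose2[OF G_cont assms]
      continuous_on_b) auto

lemma potential_nonneg: "continuous_on {-L..L} u \<Longrightarrow> potential u \<ge> 0"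
  unfolding potential_def
  by (rule integral_nonneg[OF potential_integrable]) (auto intro!: mult_nonneg_nonneg G_nonneg less_imp_le[OF b_pos])

lemma energy_eq:
  assumes w: "weak_deriv_on L u g"
  shows "energy a b G L u = (1/2) * dirichlet g + potential u"
proof -
  have wd: "weak_deriv_on L u (wderiv L u)"
    using w by (intro weak_deriv_on_wderiv) (auto simp: H1_def)
  have "energy a b G L u = integral {-L..L} (\<lambda>x. (1/2) * (g x)\<^sup>2 * a x + G (u x) * b x)"
    unfolding energy_def
    using weak_deriv_on_integral_cong[OF wd w, of "\<lambda>x y. (1/2) * y\<^sup>2 * a x + G (u x) * b x"]
    by simp
  also have "\<dots> = integral {-L..L} (\<lambda>x. (1/2) * (a x * (g x)\<^sup>2)) + potential u"
    unfolding potential_def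
    using integral_add[OF integrable_on_mult_right[OF dirichlet_integrable[OF w]]
        potential_integrable[OF weak_deriv_on_continuous[OF w]], of "1/2"]
    by (simp add: algebra_simps)
  finally show ?thesis by (simp add: dirichlet_def)
qed

lemma weak_deriv_on_if_H1_m: "u \<in> H1_m L m \<Longrightarrow> weak_deriv_on L u (wderiv L u)"
  unfolding H1_m_def by (auto intro: weak_deriv_on_wderiv)

lemma energy_nonneg:
  assumes "u \<in> H1_m L m"
  shows "energy a b G L u \<ge> 0"
proof -
  have w: "weak_deriv_on L u (wderiv L u)" by (rule weak_deriv_on_if_H1_m[OF assms])
  show ?thesis
    using energy_eq[OF w] dirichlet_nonneg[OF w] potential_nonneg[OF weak_deriv_on_continuous[OF w]]
    by simp
qed

lemma potential_tendsto:
  assumes wk: "\<And>k. continuous_on {-L..L} (w k)" and w: "continuous_on {-L..L} wl"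
    and lim: "\<And>x. x \<in> {-L..L} \<Longrightarrow> (\<lambda>k. w k x) \<longlonglongrightarrow> wl x"
    and R: "\<And>k x. x \<in> {-L..L} \<Longrightarrow> \<bar>w k x\<bar> \<le> R"
  shows "(\<lambda>k. potential (w k)) \<longlonglongrightarrow> potential wl"
proof -
  obtain Gm where Gm: "\<And>s. s \<in> {-R..R} \<Longrightarrow> norm (G s) \<le> Gm"
    using continuous_on_compact_bound[OF compact_Icc continuous_on_G] by blast
  obtain bm where bm: "\<And>x. x \<in> {-L..L} \<Longrightarrow> norm (b x) \<le> bm"
    using continuous_on_compact_bound[OF compact_Icc continuous_on_b] by blast
  have "norm (G (w k x) * b x) \<le> Gm * bm" if x: "x \<in> {-L..L}" for k x
  proof -
    have "w k x \<in> {-R..R}" using R[OF x, of k] by (simp add: abs_le_iff)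
    then show ?thesis using Gm bm[OF x] by (simp add: abs_mult mult_mono')
  qed
  moreover have "(\<lambda>k. G (w k x) * b x) \<longlonglongrightarrow> G (wl x) * b x" if x: "x \<in> {-L..L}" for x
    by (intro tendsto_mult_right continuous_on_tendsto_compose[OF G_cont lim[OF x]]) auto
  ultimately show ?thesis
    unfolding potential_def
    by (intro dominated_convergence(2)[of "\<lambda>k x. G (w k x) * b x"] potential_integrable wk)
      (auto simp: integrable_on_const)
qed

lemma H1_m_add_linear:
  assumes "v \<in> H1_m L m"
  shows "(\<lambda>x. v x + d * x / L) \<in> H1_m L (m + d)"
  using assms weak_deriv_on_add_linear[OF weak_deriv_on_if_H1_m[OF assms] L_pos, of d] L_pos
  unfolding H1_m_def H1_def by auto

lemma dirichlet_add_const: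
  assumes w: "weak_deriv_on L v g"
  shows "dirichlet (\<lambda>x. g x + e) =
    dirichlet g + 2 * e * integral {-L..L} (\<lambda>x. a x * g x) + e^2 * integral {-L..L} a"
proof -
  have agi: "(\<lambda>x. (2 * e) * (a x * g x)) integrable_on {-L..L}"
    using absolutely_integrable_continuous_mult[OF continuous_on_a weak_deriv_on_integrable(3)[OF w]]
    by (intro integrable_on_mult_right) (simp add: absolutely_integrable_on_def)
  have ai: "(\<lambda>x. e^2 * a x) integrable_on {-L..L}"
    by (intro integrable_on_mult_right integrable_continuous_real continuous_on_a)
  have "(\<lambda>x. a x * (g x + e)^2) = (\<lambda>x. (a x * (g x)^2 + (2 * e) * (a x * g x)) + e^2 * a x)"
    by (rule ext) (simp add: power2_eq_square algebra_simps)
  then show ?thesis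
    unfolding dirichlet_def
    using integral_add[OF integrable_add[OF dirichlet_integrable[OF w] agi] ai]
      integral_add[OF dirichlet_integrable[OF w] agi]
    by (simp add: integral_mult_right)
qed

lemma energy_add_linear_tendsto:
  assumes v: "v \<in> H1_m L m" and dk: "dk \<longlonglongrightarrow> 0"
  shows "(\<lambda>k. energy a b G L (\<lambda>x. v x + dk k * x / L)) \<longlonglongrightarrow> energy a b G L v"
proof -
  define g where "g = wderiv L v"
  have w: "weak_deriv_on L v g" unfolding g_def by (rule weak_deriv_on_if_H1_m[OF v])
  have vc: "continuous_on {-L..L} v" by (rule weak_deriv_on_continuous[OF w])
  obtain Vm where Vm: "\<And>x. x \<in> {-L..L} \<Longrightarrow> norm (v x) \<le> Vm"
    using continuous_on_compact_bound[OF compact_Icc vc] by blast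
  obtain Db where Db: "\<And>k. norm (dk k) \<le> Db"
    using convergent_imp_bounded[OF dk] unfolding bounded_iff by blast
  have "(\<lambda>k. potential (\<lambda>x. v x + dk k * x / L)) \<longlonglongrightarrow> potential v"
  proof (rule potential_tendsto[where R="Vm + Db"])
    show "continuous_on {-L..L} (\<lambda>x. v x + dk k * x / L)" for k
      by (intro continuous_intros vc) (use L_pos in auto)
    fix x assume x: "x \<in> {-L..L}"
    have "(\<lambda>k. v x + dk k * x / L) \<longlonglongrightarrow> v x + 0 * x / L"
      using L_pos by (intro tendsto_intros dk) simp
    then show "(\<lambda>k. v x + dk k * x / L) \<longlonglongrightarrow> v x" by simp
    fix k
    have "\<bar>dk k\<bar> * (\<bar>x\<bar> / L) \<le> Db * 1"
      using x L_pos Db[of k] by (intro mult_mono) auto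
    then have "\<bar>dk k * x / L\<bar> \<le> Db"
      using L_pos by (simp add: abs_mult abs_divide)
    then show "\<bar>v x + dk k * x / L\<bar> \<le> Vm + Db"
      using Vm[OF x] abs_triangle_ineq[of "v x" "dk k * x / L"] by simp
  qed (rule vc)
  moreover have "energy a b G L (\<lambda>x. v x + dk k * x / L) =
    (1/2) * (dirichlet g + 2 * (dk k / L) * integral {-L..L} (\<lambda>x. a x * g x)
      + (dk k / L)^2 * integral {-L..L} a) + potential (\<lambda>x. v x + dk k * x / L)" for k
    using energy_eq[OF weak_deriv_on_add_linear[OF w L_pos, of "dk k"]] dirichlet_add_const[OF w] by simp
  ultimately have "(\<lambda>k. energy a b G L (\<lambda>x. v x + dk k * x / L)) \<longlonglongrightarrow>
    (1/2) * (dirichlet g + 2 * (0 / L) * integral {-L..L} (\<lambda>x. a x * g x)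
      + (0 / L)^2 * integral {-L..L} a) + potential v"
    using L_pos by (simp only:) (intro tendsto_intros dk, simp_all)
  then show ?thesis using energy_eq[OF w] by simp
qed

end

section \<open>Lower semicontinuity of the Dirichlet integral\<close>

lemma incseq_bounded_geometric_subseq:
  fixes Q :: "nat \<Rightarrow> real"
  assumes inc: "incseq Q" and bnd: "\<And>n. Q n \<le> C"
  obtains r where "strict_mono r" "\<And>k. Q (r (Suc k)) - Q (r k) \<le> (1/4)^k"
proof -
  obtain Ql where Ql: "Q \<longlonglongrightarrow> Ql" "\<And>n. Q n \<le> Ql"
    using incseq_convergent[OF inc] bnd by blast
  have "\<exists>N. \<forall>n\<ge>N. Ql - Q n \<le> (1/4)^k" for k
  proof -
    obtain N where "\<forall>n\<ge>N. dist (Q n) Ql < (1/4)^k"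
      using Ql(1) zero_less_power[of "1/4::real" k] unfolding lim_sequentially by fastforce
    then have "\<forall>n\<ge>N. Ql - Q n \<le> (1/4)^k" by (force simp: dist_real_def abs_less_iff)
    then show ?thesis by blast
  qed
  then obtain N where N: "\<And>k n. n \<ge> N k \<Longrightarrow> Ql - Q n \<le> (1/4)^k" by metis
  define r where "r k = k + (\<Sum>i\<le>k. N i)" for k
  have "strict_mono r" by (rule strict_monoI_Suc) (simp add: r_def)
  moreover have "Q (r (Suc k)) - Q (r k) \<le> (1/4)^k" for k
  proof -
    have "N k \<le> r k" using member_le_sum[of k "{..k}" N] by (simp add: r_def)
    then show ?thesis using N[of k "r k"] Ql(2)[of "r (Suc k)"] by simp
  qed
  ultimately show thesis by (rule that)
qed

context weighted_energy
begin

definition mesh :: "nat \<Rightarrow> real" where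
  "mesh n = 2 * L / 2^n"

definition node :: "nat \<Rightarrow> nat \<Rightarrow> real" where
  "node n j = -L + real j * mesh n"

definition cell_weight :: "nat \<Rightarrow> nat \<Rightarrow> real" where
  "cell_weight n j = integral {node n j..node n (Suc j)} (\<lambda>x. 1 / a x)"

definition increment :: "(real \<Rightarrow> real) \<Rightarrow> nat \<Rightarrow> nat \<Rightarrow> real" where
  "increment u n j = u (node n (Suc j)) - u (node n j)"

text \<open>On the \<open>j\<close>-th cell of the \<open>n\<close>-th dyadic grid, \<open>dyadic_deriv u n\<close> minimizes the weighted
  Dirichlet integral among all functions whose integral over the cell is \<open>increment u n j\<close>,
  and \<open>dyadic_energy u n\<close> is this minimum summed over the cells; hence it bounds the Dirichlet
  integral of every weak derivative of \<open>u\<close> from below and increases with \<open>n\<close>.\<close>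

definition dyadic_energy :: "(real \<Rightarrow> real) \<Rightarrow> nat \<Rightarrow> real" where
  "dyadic_energy u n = (\<Sum>j<2^n. (increment u n j)^2 / cell_weight n j)"

definition dyadic_deriv :: "(real \<Rightarrow> real) \<Rightarrow> nat \<Rightarrow> real \<Rightarrow> real" where
  "dyadic_deriv u n x =
     (\<Sum>j<2^n. indicator {node n j..<node n (Suc j)} x * (increment u n j / cell_weight n j)) / a x"

lemma mesh_pos: "mesh n > 0"
  using L_pos by (simp add: mesh_def)

lemma mesh_tendsto_0: "mesh \<longlonglongrightarrow> 0"
proof -
  have "(\<lambda>n. (2*L) * (1/2::real)^n) \<longlonglongrightarrow> (2*L) * 0"
    by (intro tendsto_mult tendsto_const LIMSEQ_power_zero) simp
  moreover have "mesh = (\<lambda>n. (2*L) * (1/2::real)^n)"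
    by (rule ext) (simp add: mesh_def power_one_over)
  ultimately show ?thesis by simp
qed

lemma node_le_iff: "node n i \<le> node n k \<longleftrightarrow> i \<le> k"
  using mesh_pos[of n] by (simp add: node_def)

lemma node_less_iff: "node n i < node n k \<longleftrightarrow> i < k"
  using mesh_pos[of n] by (simp add: node_def)

lemma node_Suc_ge: "node n j \<le> node n (Suc j)"
  by (simp add: node_le_iff)

lemma node_0 [simp]: "node n 0 = -L"
  by (simp add: node_def)

lemma node_last [simp]: "node n (2^n) = L"
  by (simp add: node_def mesh_def)

lemma node_in_Icc: "j \<le> 2^n \<Longrightarrow> node n j \<in> {-L..L}"
  using node_le_iff[of n 0 j] node_le_iff[of n j "2^n"] by simp

lemma node_refine: "node n j = node (n + d) (j * 2^d)"
  by (simp add: node_def mesh_def power_add field_simps)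

lemma node_below:
  assumes "x \<in> {-L..L}"
  obtains j where "j \<le> 2^n" "node n j \<le> x" "x - node n j < mesh n"
proof -
  define t where "t = (x + L) / mesh n"
  have t: "t \<ge> 0" "t \<le> 2^n" "t * mesh n = x + L"
    using assms mesh_pos[of n] L_pos by (auto simp: t_def) (simp add: mesh_def field_simps)
  define j where "j = nat \<lfloor>t\<rfloor>"
  have j: "real j \<le> t" "t < real j + 1" using t(1) by (simp_all add: j_def)
  have "real j \<le> 2^n" using j t by linarith
  then have "j \<le> 2^n" by (metis of_nat_le_iff of_nat_numeral of_nat_power)
  moreover have "node n j \<le> x"
    using mult_right_mono[OF j(1) less_imp_le[OF mesh_pos[of n]]] t(3) by (simp add: node_def)
  moreover have "x - node n j < mesh n"
    using mult_strict_right_mono[OF j(2) mesh_pos[of n]] t(3) by (simp add: node_def algebra_simps)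
  ultimately show thesis by (rule that)
qed

lemma cell_weight_pos: "cell_weight n j > 0"
proof -
  have lt: "node n j < node n (Suc j)" by (simp add: node_less_iff)
  have cont: "continuous_on {node n j..node n (Suc j)} (\<lambda>x. 1 / a x)"
    using a_pos by (intro continuous_intros continuous_on_a) (auto simp: less_imp_neq[symmetric])
  have "cell_weight n j \<ge> 0" unfolding cell_weight_def
    by (rule integral_nonneg[OF integrable_inverse_a]) (simp add: less_imp_le[OF a_pos])
  moreover have "cell_weight n j \<noteq> 0"
  proof
    assume "cell_weight n j = 0"
    then have "\<forall>x\<in>{node n j..node n (Suc j)}. 1 / a x = 0"
      using integral_eq_0_iff[OF cont lt] a_pos unfolding cell_weight_def by (simp add: less_imp_le)
    then show False using a_pos[of "node n j"] lt by auto
  qed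
  ultimately show ?thesis by simp
qed

lemma integral_sum_cells:
  fixes f :: "real \<Rightarrow> real" and \<phi> :: "nat \<Rightarrow> real \<Rightarrow> real"
  assumes eq: "\<And>j x. j < 2^n \<Longrightarrow> x \<in> {node n j..<node n (Suc j)} \<Longrightarrow> f x = \<phi> j x"
    and int: "\<And>j. j < 2^n \<Longrightarrow> \<phi> j integrable_on {node n j..node n (Suc j)}"
  shows "f integrable_on {-L..L} \<and> integral {-L..L} f = (\<Sum>j<2^n. integral {node n j..node n (Suc j)} (\<phi> j))"
proof -
  have cell: "f integrable_on {node n j..node n (Suc j)} \<and>
      integral {node n j..node n (Suc j)} f = integral {node n j..node n (Suc j)} (\<phi> j)"
    if "j < 2^n" for j
    by (rule integrable_integral_eq_on_atLeastLessThan[OF int[OF that]]) (use eq that in auto)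
  have "f integrable_on {node n 0..node n (2^n)} \<and>
      integral {node n 0..node n (2^n)} f = (\<Sum>j<2^n. integral {node n j..node n (Suc j)} f)"
    by (rule integral_consecutive_intervals[where t="node n", OF node_Suc_ge]) (use cell in auto)
  then show ?thesis using cell by simp
qed

lemma dyadic_deriv_on_cell:
  assumes j: "j < 2^n" and x: "x \<in> {node n j..<node n (Suc j)}"
  shows "dyadic_deriv u n x = increment u n j / cell_weight n j / a x"
proof -
  have "x \<notin> {node n i..<node n (Suc i)}" if "i \<noteq> j" for i
  proof (cases "i < j")
    case True
    then have "node n (Suc i) \<le> node n j" by (simp add: node_le_iff)
    then show ?thesis using x by auto
  next
    case False
    then have "node n (Suc j) \<le> node n i" using that by (simp add: node_le_iff)
    then show ?thesis using x by auto
  qed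
  then have "(\<Sum>i<2^n. indicator {node n i..<node n (Suc i)} x * (increment u n i / cell_weight n i))
      = (\<Sum>i<2^n. if i = j then increment u n i / cell_weight n i else 0)"
    using x by (intro sum.cong) (auto simp: indicator_def)
  then show ?thesis using j by (simp add: dyadic_deriv_def)
qed

lemma dyadic_deriv_integral_cell:
  assumes j: "j < 2^n"
  shows "dyadic_deriv u n integrable_on {node n j..node n (Suc j)} \<and>
    integral {node n j..node n (Suc j)} (dyadic_deriv u n) = increment u n j"
proof -
  let ?c = "increment u n j / cell_weight n j"
  have "dyadic_deriv u n integrable_on {node n j..node n (Suc j)} \<and>
      integral {node n j..node n (Suc j)} (dyadic_deriv u n) =
      integral {node n j..node n (Suc j)} (\<lambda>x. ?c * (1 / a x))"
  proof (rule integrable_integral_eq_on_atLeastLessThan)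
    show "(\<lambda>x. ?c * (1 / a x)) integrable_on {node n j..node n (Suc j)}"
      by (rule integrable_on_mult_right[OF integrable_inverse_a])
  qed (use dyadic_deriv_on_cell[OF j] in auto)
  moreover have "integral {node n j..node n (Suc j)} (\<lambda>x. ?c * (1 / a x)) = ?c * cell_weight n j"
    unfolding cell_weight_def by (rule integral_mult_right)
  ultimately show ?thesis using cell_weight_pos[of n j] by simp
qed

lemma dyadic_deriv_integral_to_node:
  assumes k: "k \<le> 2^n"
  shows "dyadic_deriv u n integrable_on {-L..node n k} \<and>
    integral {-L..node n k} (dyadic_deriv u n) = u (node n k) - u (-L)"
proof -
  have "dyadic_deriv u n integrable_on {node n 0..node n k} \<and>
      integral {node n 0..node n k} (dyadic_deriv u n) =
      (\<Sum>j<k. integral {node n j..node n (Suc j)} (dyadic_deriv u n))"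
    by (rule integral_consecutive_intervals[where t="node n", OF node_Suc_ge])
      (use dyadic_deriv_integral_cell k in auto)
  moreover have "(\<Sum>j<k. integral {node n j..node n (Suc j)} (dyadic_deriv u n)) = (\<Sum>j<k. increment u n j)"
    by (rule sum.cong) (use dyadic_deriv_integral_cell k in auto)
  moreover have "(\<Sum>j<k. increment u n j) = u (node n k) - u (node n 0)"
    unfolding increment_def using sum_lessThan_telescope[of "\<lambda>j. u (node n j)" k] by simp
  ultimately show ?thesis by simp
qed

lemma dyadic_deriv_integral_to_coarse_node:
  assumes "n \<le> m" "j \<le> 2^n"
  shows "integral {-L..node n j} (dyadic_deriv u m) = u (node n j) - u (-L)"
proof -
  obtain d where m: "m = n + d" using assms(1) le_Suc_ex by blast
  have "j * 2^d \<le> 2^m" using assms(2) unfolding m power_add by simp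
  then show ?thesis
    using dyadic_deriv_integral_to_node[of "j * 2^d" m u] node_refine[of n j d] by (simp add: m)
qed

lemma dyadic_deriv_integral_coarse_cell:
  assumes "n \<le> m" and j: "j < 2^n"
  shows "dyadic_deriv u m integrable_on {node n j..node n (Suc j)} \<and>
    integral {node n j..node n (Suc j)} (dyadic_deriv u m) = increment u n j"
proof -
  have ge: "-L \<le> node n j" "node n (Suc j) \<le> L"
    using node_in_Icc[of j n] node_in_Icc[of "Suc j" n] j by auto
  have int: "dyadic_deriv u m integrable_on {-L..L}"
    using dyadic_deriv_integral_to_node[of "2^m" m u] by simp
  have "dyadic_deriv u m integrable_on {node n j..node n (Suc j)}"
    "dyadic_deriv u m integrable_on {-L..node n (Suc j)}"
    using ge by (auto intro: integrable_subinterval_real[OF int])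
  moreover have "integral {-L..node n j} (dyadic_deriv u m) + integral {node n j..node n (Suc j)} (dyadic_deriv u m)
      = integral {-L..node n (Suc j)} (dyadic_deriv u m)"
    by (rule Henstock_Kurzweil_Integration.integral_combine[OF ge(1) node_Suc_ge calculation(2)])
  ultimately show ?thesis
    using dyadic_deriv_integral_to_coarse_node[OF assms(1)] j by (simp add: increment_def)
qed

lemma dyadic_deriv_cross_dirichlet:
  assumes nm: "n \<le> m"
  shows "(\<lambda>x. a x * dyadic_deriv u n x * dyadic_deriv u m x) integrable_on {-L..L} \<and>
    integral {-L..L} (\<lambda>x. a x * dyadic_deriv u n x * dyadic_deriv u m x) = dyadic_energy u n"
proof -
  let ?c = "\<lambda>j. increment u n j / cell_weight n j"
  have "(\<lambda>x. a x * dyadic_deriv u n x * dyadic_deriv u m x) integrable_on {-L..L} \<and>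
      integral {-L..L} (\<lambda>x. a x * dyadic_deriv u n x * dyadic_deriv u m x)
      = (\<Sum>j<2^n. integral {node n j..node n (Suc j)} (\<lambda>x. ?c j * dyadic_deriv u m x))"
  proof (rule integral_sum_cells)
    show "a x * dyadic_deriv u n x * dyadic_deriv u m x = ?c j * dyadic_deriv u m x"
      if "j < 2^n" "x \<in> {node n j..<node n (Suc j)}" for j x
      using dyadic_deriv_on_cell[OF that] a_pos[of x] by simp
    show "(\<lambda>x. ?c j * dyadic_deriv u m x) integrable_on {node n j..node n (Suc j)}" if "j < 2^n" for j
      by (intro integrable_on_mult_right) (use dyadic_deriv_integral_coarse_cell[OF nm that] in blast)
  qed
  moreover have "(\<Sum>j<2^n. integral {node n j..node n (Suc j)} (\<lambda>x. ?c j * dyadic_deriv u m x)) = dyadic_energy u n"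
    unfolding dyadic_energy_def
    by (rule sum.cong) (use dyadic_deriv_integral_coarse_cell[OF nm] in \<open>auto simp: power2_eq_square\<close>)
  ultimately show ?thesis by simp
qed

lemma dyadic_deriv_absolutely_integrable: "dyadic_deriv u n absolutely_integrable_on {-L..L}"
proof -
  have "(\<lambda>x. norm (dyadic_deriv u n x)) integrable_on {-L..L} \<and>
      integral {-L..L} (\<lambda>x. norm (dyadic_deriv u n x)) =
      (\<Sum>j<2^n. integral {node n j..node n (Suc j)} (\<lambda>x. \<bar>increment u n j / cell_weight n j\<bar> * (1 / a x)))"
  proof (rule integral_sum_cells)
    show "norm (dyadic_deriv u n x) = \<bar>increment u n j / cell_weight n j\<bar> * (1 / a x)"
      if "j < 2^n" "x \<in> {node n j..<node n (Suc j)}" for j x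
      using dyadic_deriv_on_cell[OF that] a_pos[of x] by (simp add: abs_mult abs_divide)
    show "(\<lambda>x. \<bar>increment u n j / cell_weight n j\<bar> * (1 / a x)) integrable_on {node n j..node n (Suc j)}" for j
      by (rule integrable_on_mult_right[OF integrable_inverse_a])
  qed
  moreover have "dyadic_deriv u n integrable_on {-L..L}"
    using dyadic_deriv_integral_to_node[of "2^n" n u] by simp
  ultimately show ?thesis unfolding absolutely_integrable_on_def by blast
qed

lemma dirichlet_dyadic_deriv_diff:
  assumes "n \<le> m"
  shows "(\<lambda>x. a x * (dyadic_deriv u m x - dyadic_deriv u n x)^2) integrable_on {-L..L} \<and>
    integral {-L..L} (\<lambda>x. a x * (dyadic_deriv u m x - dyadic_deriv u n x)^2) =
    dyadic_energy u m - dyadic_energy u n"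
proof -
  let ?p = "\<lambda>i k x. a x * dyadic_deriv u i x * dyadic_deriv u k x"
  have c: "?p m m integrable_on {-L..L}" "?p n m integrable_on {-L..L}" "?p n n integrable_on {-L..L}"
    "integral {-L..L} (?p m m) = dyadic_energy u m" "integral {-L..L} (?p n m) = dyadic_energy u n"
    "integral {-L..L} (?p n n) = dyadic_energy u n"
    using dyadic_deriv_cross_dirichlet[of m m u] dyadic_deriv_cross_dirichlet[OF assms, of u]
      dyadic_deriv_cross_dirichlet[of n n u] by auto
  have "(\<lambda>x. a x * (dyadic_deriv u m x - dyadic_deriv u n x)^2) =
      (\<lambda>x. (?p m m x - 2 * ?p n m x) + ?p n n x)"
    by (rule ext) (simp add: power2_eq_square algebra_simps)
  moreover have i: "(\<lambda>x. ?p m m x - 2 * ?p n m x) integrable_on {-L..L}"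
    by (intro integrable_diff integrable_on_mult_right c)
  ultimately show ?thesis
    using integrable_add[OF i c(3)] integral_add[OF i c(3)]
      integral_diff[OF c(1) integrable_on_mult_right[OF c(2)]] c(4-6)
    by (simp add: integral_mult_right)
qed

lemma dyadic_energy_mono:
  assumes "n \<le> m"
  shows "dyadic_energy u n \<le> dyadic_energy u m"
proof -
  have "integral {-L..L} (\<lambda>x. a x * (dyadic_deriv u m x - dyadic_deriv u n x)^2) \<ge> 0"
    using dirichlet_dyadic_deriv_diff[OF assms, of u]
    by (intro integral_nonneg) (auto intro!: mult_nonneg_nonneg less_imp_le[OF a_pos])
  then show ?thesis using dirichlet_dyadic_deriv_diff[OF assms, of u] by simp
qed

lemma L1_dyadic_deriv_diff_le:
  assumes "n \<le> m"
  shows "integral {-L..L} (\<lambda>x. \<bar>dyadic_deriv u m x - dyadic_deriv u n x\<bar>) \<le>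
    sqrt (integral {-L..L} (\<lambda>x. 1 / a x)) * sqrt (dyadic_energy u m - dyadic_energy u n)"
proof -
  let ?d = "\<lambda>x. \<bar>dyadic_deriv u m x - dyadic_deriv u n x\<bar>"
  have di: "?d integrable_on {-L..L}"
    using set_integral_diff(1)[OF dyadic_deriv_absolutely_integrable dyadic_deriv_absolutely_integrable]
    unfolding absolutely_integrable_on_def by simp
  have "(integral {-L..L} ?d)^2 \<le> integral {-L..L} (\<lambda>x. 1 / a x) * integral {-L..L} (\<lambda>x. a x * (?d x)^2)"
    by (rule weighted_Cauchy_Schwarz_integral[OF _ di integrable_inverse_a a_pos])
      (use dirichlet_dyadic_deriv_diff[OF assms, of u] in simp)
  also have "\<dots> = integral {-L..L} (\<lambda>x. 1 / a x) * (dyadic_energy u m - dyadic_energy u n)"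
    using dirichlet_dyadic_deriv_diff[OF assms, of u] by simp
  finally have "sqrt ((integral {-L..L} ?d)^2) \<le>
      sqrt (integral {-L..L} (\<lambda>x. 1 / a x) * (dyadic_energy u m - dyadic_energy u n))"
    using real_sqrt_le_mono by blast
  moreover have "integral {-L..L} ?d \<ge> 0" by (rule integral_nonneg[OF di]) simp
  ultimately show ?thesis by (simp add: real_sqrt_mult)
qed

lemma L1_dyadic_deriv_diff_geometric:
  assumes "n \<le> m" "dyadic_energy u m - dyadic_energy u n \<le> (1/4)^k"
  shows "integral {-L..L} (\<lambda>x. \<bar>dyadic_deriv u m x - dyadic_deriv u n x\<bar>) \<le>
    sqrt (integral {-L..L} (\<lambda>x. 1 / a x)) * (1/2)^k"
proof -
  have "integral {-L..L} (\<lambda>x. 1 / a x) \<ge> 0"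
    by (rule integral_nonneg[OF integrable_inverse_a]) (simp add: less_imp_le[OF a_pos])
  then have "sqrt (integral {-L..L} (\<lambda>x. 1 / a x)) * sqrt (dyadic_energy u m - dyadic_energy u n)
      \<le> sqrt (integral {-L..L} (\<lambda>x. 1 / a x)) * sqrt ((1/4)^k)"
    using assms(2) by (intro mult_left_mono real_sqrt_le_mono) simp_all
  also have "sqrt ((1/4::real)^k) = (1/2)^k"
    by (simp add: real_sqrt_power real_sqrt_divide)
  finally show ?thesis using L1_dyadic_deriv_diff_le[OF assms(1), of u] by linarith
qed

lemma dyadic_energy_le_dirichlet:
  assumes w: "weak_deriv_on L u g"
  shows "dyadic_energy u n \<le> dirichlet g"
proof -
  have I: "-L \<le> node n j" "node n (Suc j) \<le> L" if "j < 2^n" for j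
    using node_in_Icc[of j n] node_in_Icc[of "Suc j" n] that by auto
  have sub: "(\<lambda>x. a x * (g x)^2) integrable_on {node n j..node n (Suc j)}" if "j < 2^n" for j
    by (rule integrable_subinterval_real[OF dirichlet_integrable[OF w]]) (use I[OF that] in auto)
  have "(increment u n j)^2 / cell_weight n j \<le> integral {node n j..node n (Suc j)} (\<lambda>x. a x * (g x)^2)"
    if j: "j < 2^n" for j
  proof -
    have "increment u n j = integral {node n j..node n (Suc j)} g"
      unfolding increment_def by (rule weak_deriv_on_diff[OF w]) (use I[OF j] node_Suc_ge in auto)
    moreover have "(integral {node n j..node n (Suc j)} g)^2 \<le>
        cell_weight n j * integral {node n j..node n (Suc j)} (\<lambda>x. a x * (g x)^2)"
      unfolding cell_weight_def
      by (rule weighted_Cauchy_Schwarz_integral[OF sub[OF j] _ integrable_inverse_a a_pos])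
        (use weak_deriv_on_integrable_subinterval(1)[OF w I[OF j]] in simp)
    ultimately show ?thesis using cell_weight_pos[of n j] by (simp add: divide_le_eq mult.commute)
  qed
  then have "dyadic_energy u n \<le> (\<Sum>j<2^n. integral {node n j..node n (Suc j)} (\<lambda>x. a x * (g x)^2))"
    unfolding dyadic_energy_def by (intro sum_mono) auto
  also have "\<dots> = dirichlet g"
    using integral_consecutive_intervals[where t="node n" and N="2^n", OF node_Suc_ge sub]
    by (simp add: dirichlet_def)
  finally show ?thesis .
qed

end

context weighted_energy
begin

lemma dirichlet_le_if_AE_limit:
  fixes h :: "nat \<Rightarrow> real \<Rightarrow> real"
  assumes hi: "\<And>k. (\<lambda>x. a x * (h k x)^2) integrable_on {-L..L}"
    and hC: "\<And>k. integral {-L..L} (\<lambda>x. a x * (h k x)^2) \<le> C"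
    and gm[measurable]: "g \<in> borel_measurable (lebesgue_on {-L..L})"
    and lim: "AE x in lebesgue_on {-L..L}. (\<lambda>k. h k x) \<longlonglongrightarrow> g x"
  shows "(\<lambda>x. (g x)^2) integrable_on {-L..L}" "dirichlet g \<le> C"
proof -
  let ?M = "lebesgue_on {-L..L}"
  have am[measurable]: "a \<in> borel_measurable ?M"
    by (rule continuous_imp_measurable_on_sets_lebesgue[OF continuous_on_a]) simp
  have fM: "integrable ?M (\<lambda>x. a x * (h k x)^2)" for k
    using hi[of k] absolutely_integrable_on_iff_nonneg[of "{-L..L}" "\<lambda>x. a x * (h k x)^2"]
      absolutely_integrable_on_Icc_iff_lebesgue_on by (simp add: less_imp_le[OF a_pos])
  have "integrable ?M (\<lambda>x. a x * (g x)^2) \<and> (\<integral>x. a x * (g x)^2 \<partial>?M) \<le> C"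
  proof (rule Fatou_integrable_le[of "\<lambda>k x. a x * (h k x)^2"])
    show "(\<integral>x. a x * (h k x)^2 \<partial>?M) \<le> C" for k
      using lebesgue_integral_eq_integral[OF fM[of k]] hC[of k] by simp
    show "AE x in ?M. (\<lambda>k. a x * (h k x)^2) \<longlonglongrightarrow> a x * (g x)^2"
      using lim by (rule AE_mp) (auto intro!: AE_I2 tendsto_intros)
  qed (use fM in \<open>auto simp: less_imp_le[OF a_pos]\<close>)
  then have agM: "integrable ?M (\<lambda>x. a x * (g x)^2)" and "(\<integral>x. a x * (g x)^2 \<partial>?M) \<le> C"
    by auto
  then show "dirichlet g \<le> C"
    unfolding dirichlet_def using lebesgue_integral_eq_integral[OF agM] by simp
  obtain c where c: "c > 0" "\<And>x. x \<in> {-L..L} \<Longrightarrow> c \<le> a x" using a_lower_bound by blast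
  have "integrable ?M (\<lambda>x. (g x)^2)"
  proof (rule Bochner_Integration.integrable_bound[where f="\<lambda>x. a x * (g x)^2 / c"])
    show "integrable ?M (\<lambda>x. a x * (g x)^2 / c)" using agM by simp
    show "AE x in ?M. norm ((g x)^2) \<le> norm (a x * (g x)^2 / c)"
    proof (rule AE_I2)
      fix x assume "x \<in> space ?M"
      then have "c * (g x)^2 \<le> a x * (g x)^2" using c by (simp add: mult_right_mono)
      then show "norm ((g x)^2) \<le> norm (a x * (g x)^2 / c)"
        using c a_pos[of x] by (simp add: field_simps)
    qed
  qed measurable
  then show "(\<lambda>x. (g x)^2) integrable_on {-L..L}" by (rule integrable_on_lebesgue_on) simp
qed

lemma weak_deriv_on_if_node_integrals:
  assumes uc: "continuous_on {-L..L} u" and gi: "g absolutely_integrable_on {-L..L}"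
    and g2: "(\<lambda>x. (g x)^2) integrable_on {-L..L}"
    and nodes: "\<And>n j. j \<le> 2^n \<Longrightarrow> integral {-L..node n j} g = u (node n j) - u (-L)"
  shows "weak_deriv_on L u g"
proof -
  have Gc: "continuous_on {-L..L} (\<lambda>y. integral {-L..y} g)"
    using gi by (intro indefinite_integral_continuous_1) (simp add: absolutely_integrable_on_def)
  have "u x = u (-L) + integral {-L..x} g" if x: "x \<in> {-L..L}" for x
  proof -
    have "\<exists>j. j \<le> 2^n \<and> node n j \<le> x \<and> x - node n j < mesh n" for n
      using node_below[OF x] by metis
    then obtain J where J: "\<And>n. J n \<le> 2^n" "\<And>n. node n (J n) \<le> x" "\<And>n. x - node n (J n) < mesh n"
      by metis
    define y where "y n = node n (J n)" for n
    have y: "y n \<in> {-L..L}" for n unfolding y_def by (rule node_in_Icc[OF J(1)])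
    have "y \<longlonglongrightarrow> x"
    proof (rule tendsto_sandwich[of "\<lambda>n. x - mesh n" _ _ "\<lambda>n. x"])
      have "x - mesh n \<le> y n" for n using J(3)[of n] by (simp add: y_def)
      then show "\<forall>\<^sub>F n in sequentially. x - mesh n \<le> y n" by (auto intro: always_eventually)
      show "\<forall>\<^sub>F n in sequentially. y n \<le> x"
        using J(2) by (auto intro!: always_eventually simp: y_def)
      show "(\<lambda>n. x - mesh n) \<longlonglongrightarrow> x"
        using tendsto_diff[OF tendsto_const mesh_tendsto_0, of x] by simp
    qed simp
    then have "(\<lambda>n. u (y n) - u (-L)) \<longlonglongrightarrow> u x - u (-L)"
      and "(\<lambda>n. integral {-L..y n} g) \<longlonglongrightarrow> integral {-L..x} g"
      using y x by (auto intro!: tendsto_diff continuous_on_tendsto_compose[OF uc]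
          continuous_on_tendsto_compose[OF Gc] always_eventually)
    moreover have "integral {-L..y n} g = u (y n) - u (-L)" for n
      unfolding y_def by (rule nodes[OF J(1)])
    ultimately have "integral {-L..x} g = u x - u (-L)" using LIMSEQ_unique by auto
    then show ?thesis by simp
  qed
  then show ?thesis using gi g2 unfolding weak_deriv_on_def by blast
qed

lemma weak_deriv_on_if_dyadic_energy_bounded:
  assumes uc: "continuous_on {-L..L} u" and QC: "\<And>n. dyadic_energy u n \<le> C"
  obtains g where "weak_deriv_on L u g" "dirichlet g \<le> C"
proof -
  obtain r where r: "strict_mono r" "\<And>k. dyadic_energy u (r (Suc k)) - dyadic_energy u (r k) \<le> (1/4)^k"
    using incseq_bounded_geometric_subseq[of "dyadic_energy u"] dyadic_energy_mono QC
    by (metis incseq_def)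
  define h where "h k = dyadic_deriv u (r k)" for k
  have sq: "(\<lambda>x. a x * (h k x)^2) integrable_on {-L..L} \<and>
      integral {-L..L} (\<lambda>x. a x * (h k x)^2) = dyadic_energy u (r k)" for k
    using dyadic_deriv_cross_dirichlet[of "r k" "r k" u] by (simp add: h_def power2_eq_square mult.assoc)
  have fast: "integral {-L..L} (\<lambda>x. \<bar>h (Suc k) x - h k x\<bar>) \<le>
      sqrt (integral {-L..L} (\<lambda>x. 1 / a x)) * (1/2)^k" for k
    unfolding h_def using strict_mono_less_eq[OF r(1)] r(2)
    by (intro L1_dyadic_deriv_diff_geometric) auto
  obtain g where gM: "integrable (lebesgue_on {-L..L}) g"
    and glim: "AE x in lebesgue_on {-L..L}. (\<lambda>k. h k x) \<longlonglongrightarrow> g x"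
    and conv: "\<And>y. y \<in> {-L..L} \<Longrightarrow> (\<lambda>k. integral {-L..y} (h k)) \<longlonglongrightarrow> integral {-L..y} g"
    using geometric_L1_Cauchy_limit_Icc[OF _ fast] dyadic_deriv_absolutely_integrable
    unfolding h_def by blast
  have g2: "(\<lambda>x. (g x)^2) integrable_on {-L..L}" and "dirichlet g \<le> C"
    using dirichlet_le_if_AE_limit[of h C g] sq QC borel_measurable_integrable[OF gM] glim by auto
  moreover have "weak_deriv_on L u g"
  proof (rule weak_deriv_on_if_node_integrals[OF uc _ g2])
    show "g absolutely_integrable_on {-L..L}"
      using gM absolutely_integrable_on_Icc_iff_lebesgue_on by blast
    fix n j :: nat assume j: "j \<le> 2^n"
    have "\<forall>\<^sub>F k in sequentially. integral {-L..node n j} (h k) = u (node n j) - u (-L)"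
      using dyadic_deriv_integral_to_coarse_node[OF _ j] order_trans[OF _ seq_suble[OF r(1)]]
      by (intro eventually_sequentiallyI[of n]) (simp add: h_def)
    then have "(\<lambda>k. integral {-L..node n j} (h k)) \<longlonglongrightarrow> u (node n j) - u (-L)"
      by (rule tendsto_eventually)
    then show "integral {-L..node n j} g = u (node n j) - u (-L)"
      using conv[OF node_in_Icc[OF j]] LIMSEQ_unique by blast
  qed
  ultimately show thesis using that by blast
qed

end

section \<open>Minimizers\<close>

lemma Holder_bounded_seq_convergent_subseq:
  fixes u :: "nat \<Rightarrow> real \<Rightarrow> real"
  assumes bnd: "\<And>k x. x \<in> {p..q} \<Longrightarrow> \<bar>u k x\<bar> \<le> R"
    and hol: "\<And>k x y. x \<in> {p..q} \<Longrightarrow> y \<in> {p..q} \<Longrightarrow> \<bar>u k x - u k y\<bar> \<le> B * sqrt \<bar>x - y\<bar>"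
    and B: "B \<ge> 0"
  obtains v r where "continuous_on {p..q} v" "strict_mono r"
    "\<And>x. x \<in> {p..q} \<Longrightarrow> (\<lambda>k. u (r k) x) \<longlonglongrightarrow> v x"
proof -
  obtain v r where vc: "continuous_on {p..q} v" and r: "strict_mono (r :: nat \<Rightarrow> nat)"
    and unif: "\<And>e. 0 < e \<Longrightarrow> \<exists>N. \<forall>n x. n \<ge> N \<and> x \<in> {p..q} \<longrightarrow> norm (u (r n) x - v x) < e"
  proof (rule Arzela_Ascoli[of "{p..q}" u R])
    show "norm (u n x) \<le> R" if "x \<in> {p..q}" for n x using bnd[OF that] by simp
    fix x e :: real assume x: "x \<in> {p..q}" and e: "0 < e"
    define d where "d = (e / (B + 1))^2"
    have d: "d > 0" using e B by (simp add: d_def)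
    have "norm (u n x - u n y) < e" if y: "y \<in> {p..q}" "norm (x - y) < d" for n y
    proof -
      have "sqrt \<bar>x - y\<bar> < e / (B + 1)" using y e B real_sqrt_less_mono[of "\<bar>x - y\<bar>" d]
        by (simp add: d_def)
      then have "B * sqrt \<bar>x - y\<bar> \<le> B * (e / (B + 1))" using B by (intro mult_left_mono) auto
      also have "\<dots> < e" using e B by (simp add: field_simps)
      finally show ?thesis using hol[OF x y(1), of n] by simp
    qed
    then show "\<exists>d>0. \<forall>n y. y \<in> {p..q} \<and> norm (x - y) < d \<longrightarrow> norm (u n x - u n y) < e"
      using d by blast
  qed (auto simp: compact_Icc)
  moreover have "(\<lambda>k. u (r k) x) \<longlonglongrightarrow> v x" if "x \<in> {p..q}" for x
    using unif that by (intro LIMSEQ_I) blast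
  ultimately show thesis using that by blast
qed

lemma odd_on_if_pointwise_limit:
  assumes odd: "\<And>k. odd_on L (u k)"
    and lim: "\<And>x. x \<in> {-L..L} \<Longrightarrow> (\<lambda>k. u k x) \<longlonglongrightarrow> w x"
  shows "odd_on L w"
  unfolding odd_on_def
proof
  fix x assume x: "x \<in> {-L<..<L}"
  then have "(\<lambda>k. u k (-x)) \<longlonglongrightarrow> w (-x)" "(\<lambda>k. - u k x) \<longlonglongrightarrow> - w x"
    using lim by (auto intro: tendsto_minus)
  moreover have "(\<lambda>k. u k (-x)) = (\<lambda>k. - u k x)"
    using odd x unfolding odd_on_def by blast
  ultimately show "w (-x) = - w x" using LIMSEQ_unique by metis
qed

lemma seq_tendsto_if_arbitrarily_close:
  fixes m0 :: real
  assumes "\<And>\<epsilon>. \<epsilon> > 0 \<Longrightarrow> \<exists>m. m0 - \<epsilon> < m \<and> m < m0 + \<epsilon> \<and> P m"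
  obtains mk where "mk \<longlonglongrightarrow> m0" "\<And>k. P (mk k)"
proof -
  have "\<forall>k. \<exists>m. m0 - 1 / (real k + 1) < m \<and> m < m0 + 1 / (real k + 1) \<and> P m"
    using assms by simp
  then obtain mk where mk: "\<And>k. m0 - 1 / (real k + 1) < mk k \<and> mk k < m0 + 1 / (real k + 1) \<and> P (mk k)"
    by metis
  have inv: "(\<lambda>k. 1 / (real k + 1)) \<longlonglongrightarrow> 0"
    using LIMSEQ_inverse_real_of_nat by (simp add: inverse_eq_divide add.commute)
  have "mk \<longlonglongrightarrow> m0"
  proof (rule tendsto_sandwich[of "\<lambda>k. m0 - 1 / (real k + 1)" _ _ "\<lambda>k. m0 + 1 / (real k + 1)"])
    show "\<forall>\<^sub>F k in sequentially. m0 - 1 / (real k + 1) \<le> mk k"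
      "\<forall>\<^sub>F k in sequentially. mk k \<le> m0 + 1 / (real k + 1)"
      using mk by (auto intro: always_eventually less_imp_le)
  qed (use tendsto_diff[OF tendsto_const inv, of m0] tendsto_add[OF tendsto_const inv, of m0] in simp_all)
  with mk show thesis using that by blast
qed

context weighted_energy
begin

lemma Holder_bound_if_energy_le:
  obtains B where "B \<ge> 0" "\<And>u m x y. u \<in> H1_m L m \<Longrightarrow> energy a b G L u \<le> E \<Longrightarrow>
    x \<in> {-L..L} \<Longrightarrow> y \<in> {-L..L} \<Longrightarrow> \<bar>u x - u y\<bar> \<le> B * sqrt \<bar>x - y\<bar>"
proof -
  obtain c where c: "c > 0"
    "\<And>u g. weak_deriv_on L u g \<Longrightarrow> c * integral {-L..L} (\<lambda>x. (g x)^2) \<le> dirichlet g"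
    using square_integral_le_dirichlet by blast
  have Holder: "\<bar>u x - u y\<bar> \<le> sqrt (2 * \<bar>E\<bar> / c) * sqrt \<bar>x - y\<bar>"
    if u: "u \<in> H1_m L m" "energy a b G L u \<le> E" and xy: "x \<in> {-L..L}" "y \<in> {-L..L}" for u m x y
  proof -
    let ?g = "wderiv L u"
    have w: "weak_deriv_on L u ?g" by (rule weak_deriv_on_if_H1_m[OF u(1)])
    have "c * integral {-L..L} (\<lambda>x. (?g x)^2) \<le> 2 * E"
      using c(2)[OF w] energy_eq[OF w] u(2) potential_nonneg[OF weak_deriv_on_continuous[OF w]] by simp
    then have "integral {-L..L} (\<lambda>x. (?g x)^2) \<le> 2 * \<bar>E\<bar> / c"
      using c(1) by (simp add: field_simps)
    then have "sqrt (integral {-L..L} (\<lambda>x. (?g x)^2)) * sqrt \<bar>x - y\<bar> \<le> sqrt (2 * \<bar>E\<bar> / c) * sqrt \<bar>x - y\<bar>"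
      by (intro mult_right_mono real_sqrt_le_mono) simp_all
    then show ?thesis using weak_deriv_on_Holder[OF w xy] by linarith
  qed
  moreover have "sqrt (2 * \<bar>E\<bar> / c) \<ge> 0" using c(1) by simp
  ultimately show thesis using that by blast
qed

lemma energy_le_if_pointwise_limit:
  assumes uk: "\<And>k. u k \<in> H1_m L (mk k)" and Ek: "\<And>k. energy a b G L (u k) \<le> c k"
    and c: "c \<longlonglongrightarrow> l" and bnd: "\<And>k x. x \<in> {-L..L} \<Longrightarrow> \<bar>u k x\<bar> \<le> R"
    and vc: "continuous_on {-L..L} v" and lim: "\<And>x. x \<in> {-L..L} \<Longrightarrow> (\<lambda>k. u k x) \<longlonglongrightarrow> v x"
  shows "H1 L v" "energy a b G L v \<le> l"
proof -
  have w: "weak_deriv_on L (u k) (wderiv L (u k))" for k by (rule weak_deriv_on_if_H1_m[OF uk])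
  have pot: "(\<lambda>k. potential (u k)) \<longlonglongrightarrow> potential v"
    using weak_deriv_on_continuous[OF w] by (intro potential_tendsto[OF _ vc lim bnd])
  have "dyadic_energy v n \<le> 2 * (l - potential v)" for n
  proof (rule LIMSEQ_le)
    show "(\<lambda>k. dyadic_energy (u k) n) \<longlonglongrightarrow> dyadic_energy v n"
      unfolding dyadic_energy_def increment_def
      using cell_weight_pos by (intro tendsto_intros lim node_in_Icc) (auto simp: less_imp_neq[symmetric])
    show "(\<lambda>k. 2 * (c k - potential (u k))) \<longlonglongrightarrow> 2 * (l - potential v)"
      by (intro tendsto_intros c pot)
    have "dyadic_energy (u k) n \<le> 2 * (c k - potential (u k))" for k
      using dyadic_energy_le_dirichlet[OF w, of k n] energy_eq[OF w, of k] Ek[of k] by simp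
    then show "\<exists>N. \<forall>k\<ge>N. dyadic_energy (u k) n \<le> 2 * (c k - potential (u k))" by blast
  qed
  then obtain g where "weak_deriv_on L v g" "dirichlet g \<le> 2 * (l - potential v)"
    using weak_deriv_on_if_dyadic_energy_bounded[OF vc] by blast
  then show "H1 L v" "energy a b G L v \<le> l"
    using energy_eq by (auto simp: H1_def)
qed

lemma bounded_energy_convergent_subseq:
  assumes uk: "\<And>k. u k \<in> H1_m L (mk k)" and mk: "mk \<longlonglongrightarrow> m"
    and Ek: "\<And>k. energy a b G L (u k) \<le> c k" and c: "c \<longlonglongrightarrow> l"
  obtains v r where "strict_mono r" "v \<in> H1_m L m" "energy a b G L v \<le> l"
    "\<And>x. x \<in> {-L..L} \<Longrightarrow> (\<lambda>k. u (r k) x) \<longlonglongrightarrow> v x"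
proof -
  obtain E where "\<forall>x\<in>range c. norm x \<le> E"
    using convergent_imp_bounded[OF c] unfolding bounded_iff by blast
  then have E: "c k \<le> E" for k by (metis abs_le_D1 rangeI real_norm_def)
  obtain B where B0: "B \<ge> 0" and Bh: "\<And>u m x y. u \<in> H1_m L m \<Longrightarrow> energy a b G L u \<le> E \<Longrightarrow>
      x \<in> {-L..L} \<Longrightarrow> y \<in> {-L..L} \<Longrightarrow> \<bar>u x - u y\<bar> \<le> B * sqrt \<bar>x - y\<bar>"
    using Holder_bound_if_energy_le[of E] by blast
  have B: "\<bar>u k x - u k y\<bar> \<le> B * sqrt \<bar>x - y\<bar>" if "x \<in> {-L..L}" "y \<in> {-L..L}" for k x y
    by (rule Bh[OF uk order_trans[OF Ek E] that])
  obtain Mb where "\<forall>x\<in>range mk. norm x \<le> Mb"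
    using convergent_imp_bounded[OF mk] unfolding bounded_iff by blast
  then have Mb: "\<bar>mk k\<bar> \<le> Mb" for k by (metis rangeI real_norm_def)
  have bnd: "\<bar>u k x\<bar> \<le> Mb + B * sqrt (2 * L)" if x: "x \<in> {-L..L}" for k x
  proof -
    have "\<bar>u k x - u k (-L)\<bar> \<le> B * sqrt \<bar>x - (-L)\<bar>" by (rule B) (use x L_pos in auto)
    also have "\<dots> \<le> B * sqrt (2 * L)" using x B0 by (intro mult_left_mono real_sqrt_le_mono) auto
    finally show ?thesis using uk[of k] Mb[of k] by (simp add: H1_m_def)
  qed
  obtain v r where vc: "continuous_on {-L..L} v" and r: "strict_mono r"
    and lim: "\<And>x. x \<in> {-L..L} \<Longrightarrow> (\<lambda>k. u (r k) x) \<longlonglongrightarrow> v x"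
    using Holder_bounded_seq_convergent_subseq[where u=u, OF bnd B B0] by blast
  have cr: "(\<lambda>k. c (r k)) \<longlonglongrightarrow> l" and mr: "(\<lambda>k. mk (r k)) \<longlonglongrightarrow> m"
    using LIMSEQ_subseq_LIMSEQ[OF c r] LIMSEQ_subseq_LIMSEQ[OF mk r] by (simp_all add: o_def)
  have "H1 L v" "energy a b G L v \<le> l"
    using energy_le_if_pointwise_limit[OF uk Ek cr bnd vc lim] by auto
  moreover have "(\<lambda>k. u (r k) (-L)) \<longlonglongrightarrow> - m" "(\<lambda>k. u (r k) L) \<longlonglongrightarrow> m"
    using uk tendsto_minus[OF mr] mr by (simp_all add: H1_m_def)
  then have "v (-L) = - m" "v L = m"
    using L_pos by (auto intro: LIMSEQ_unique[OF lim])
  ultimately have "v \<in> H1_m L m" by (simp add: H1_m_def)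
  then show thesis using that[OF r _ _ lim] \<open>energy a b G L v \<le> l\<close> by blast
qed

lemma minimizer_exists: "\<exists>u. is_minimizer a b G L m u"
proof -
  define S where "S = energy a b G L ` H1_m L m"
  have "(\<lambda>x. 0 + m * x / L) \<in> H1_m L m"
    using weak_deriv_on_add_linear[OF weak_deriv_on_const L_pos, of 0 m] L_pos
    unfolding H1_m_def H1_def by auto
  then have Sne: "S \<noteq> {}" unfolding S_def by blast
  have Sbd: "bdd_below S" unfolding S_def bdd_below_def using energy_nonneg by blast
  have "\<exists>u. u \<in> H1_m L m \<and> energy a b G L u < Inf S + 1 / (real k + 1)" for k
    using cInf_lessD[OF Sne, of "Inf S + 1 / (real k + 1)"] unfolding S_def by auto
  then obtain u where u: "\<And>k. u k \<in> H1_m L m" "\<And>k. energy a b G L (u k) < Inf S + 1 / (real k + 1)"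
    by metis
  have "(\<lambda>k. Inf S + 1 / (real k + 1)) \<longlonglongrightarrow> Inf S"
    using tendsto_add[OF tendsto_const LIMSEQ_inverse_real_of_nat, of "Inf S"]
    by (simp add: inverse_eq_divide add.commute)
  then obtain v where v: "v \<in> H1_m L m" "energy a b G L v \<le> Inf S"
    using bounded_energy_convergent_subseq[where u=u, OF u(1) tendsto_const less_imp_le[OF u(2)]]
    by blast
  have "energy a b G L v \<le> energy a b G L w" if "w \<in> H1_m L m" for w
    using v(2) cInf_lower[OF _ Sbd, of "energy a b G L w"] that unfolding S_def by force
  with v(1) show ?thesis unfolding is_minimizer_def by blast
qed

lemma minimizers_convergent_subseq:
  assumes mk: "mk \<longlonglongrightarrow> m" and u: "\<And>k. is_minimizer a b G L (mk k) (u k)"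
  obtains w r where "strict_mono r" "is_minimizer a b G L m w"
    "\<And>x. x \<in> {-L..L} \<Longrightarrow> (\<lambda>k. u (r k) x) \<longlonglongrightarrow> w x"
proof -
  obtain v where v: "is_minimizer a b G L m v" using minimizer_exists by blast
  then have vH: "v \<in> H1_m L m" by (simp add: is_minimizer_def)
  define c where "c k = energy a b G L (\<lambda>x. v x + (mk k - m) * x / L)" for k
  have "(\<lambda>k. mk k - m) \<longlonglongrightarrow> 0" using tendsto_diff[OF mk tendsto_const, of m] by simp
  then have cl: "c \<longlonglongrightarrow> energy a b G L v"
    unfolding c_def by (rule energy_add_linear_tendsto[OF vH])
  have "energy a b G L (u k) \<le> c k" for k
    using u[of k] H1_m_add_linear[OF vH, of "mk k - m"] unfolding is_minimizer_def c_def by simp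
  moreover have "u k \<in> H1_m L (mk k)" for k using u by (simp add: is_minimizer_def)
  ultimately obtain w r where "strict_mono r" "w \<in> H1_m L m" "energy a b G L w \<le> energy a b G L v"
    "\<And>x. x \<in> {-L..L} \<Longrightarrow> (\<lambda>k. u (r k) x) \<longlonglongrightarrow> w x"
    using bounded_energy_convergent_subseq[where u=u, OF _ mk _ cl] by blast
  moreover have "is_minimizer a b G L m w"
    using v calculation(2,3) unfolding is_minimizer_def by (meson order_trans)
  ultimately show thesis using that by blast
qed

end

lemma continuous_on_if_C11_loc: "C11_loc G \<Longrightarrow> continuous_on UNIV G"
  unfolding C11_loc_def
  by (intro continuous_at_imp_continuous_on) (auto intro: differentiable_imp_continuous_within)

theorem proposition5p4:
  fixes a b G :: "real \<Rightarrow> real" and M L m0 :: real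
  assumes a_cont: "continuous_on UNIV a" and a_even: "even_fun a" and a_pos: "\<forall>x. a x > 0"
    and b_cont: "continuous_on UNIV b" and b_even: "even_fun b" and b_pos: "\<forall>x. b x > 0"
    and G_reg: "C11_loc G" and G_even: "even_fun G"
    and M_pos: "M > 0" and GM: "G M = 0" and G_ge: "\<forall>s. G s \<ge> G M"
    and G_pos: "\<forall>s\<in>{0..<M}. G s > 0"
    and L_pos: "L > 0"
    and m0_nonneg: "m0 \<ge> 0"
    and nonodd: "\<forall>u. is_minimizer a b G L m0 u \<longrightarrow> \<not> odd_on L u"
  shows "\<exists>\<epsilon>>0. \<forall>m. m0 - \<epsilon> < m \<and> m < m0 + \<epsilon> \<and> m \<ge> 0 \<longrightarrow>
            (\<exists>u. is_minimizer a b G L m u \<and> \<not> odd_on L u)"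
proof (rule ccontr)
  let ?P = "\<lambda>m. \<forall>u. is_minimizer a b G L m u \<longrightarrow> odd_on L u"
  assume contra: "\<not> ?thesis"
  have "\<exists>m. m0 - \<epsilon> < m \<and> m < m0 + \<epsilon> \<and> ?P m" if eps: "\<epsilon> > 0" for \<epsilon>
  proof -
    obtain m where "m0 - \<epsilon> < m" "m < m0 + \<epsilon>" "m \<ge> 0"
      "\<not> (\<exists>u. is_minimizer a b G L m u \<and> \<not> odd_on L u)"
      using contra eps by auto
    then show ?thesis by blast
  qed
  then obtain mk where mk: "mk \<longlonglongrightarrow> m0" and odd: "\<And>k u. is_minimizer a b G L (mk k) u \<Longrightarrow> odd_on L u"
    using seq_tendsto_if_arbitrarily_close[where P="?P"] by blast
  interpret weighted_energy a b G L
    using a_cont a_pos b_cont b_pos continuous_on_if_C11_loc[OF G_reg] G_ge GM L_pos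
    by unfold_locales auto
  have "\<forall>k. \<exists>u. is_minimizer a b G L (mk k) u" using minimizer_exists by blast
  then obtain u where u: "\<And>k. is_minimizer a b G L (mk k) (u k)" by metis
  obtain w r where "is_minimizer a b G L m0 w" "\<And>x. x \<in> {-L..L} \<Longrightarrow> (\<lambda>k. u (r k) x) \<longlonglongrightarrow> w x"
    using minimizers_convergent_subseq[where u=u, OF mk u] by blast
  moreover have "odd_on L w"
    using odd_on_if_pointwise_limit[where u="\<lambda>k. u (r k)"] odd u calculation(2) by blast
  ultimately show False using nonodd by blast
qed

end
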